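(* Assume the setting below. For every $i\in\mathbb{N}$ let $Y_i,Y_i'\subseteq X_i\setminus\{o\}$ be non-empty disjoint subsets, let $\mathcal{Y}=\prod_{i\ge1}Y_i$, $\mathcal{Y}'=\prod_{i\ge1}Y_i'$ (with the product topology of the discrete finite sets), and let $m_j$ denote the maximal order of an element of $A_j$. Suppose that for every $n\in\mathbb{N}$ there is some $j$ with \[|Y_j|\,|Y_j'|>n\,m_j\,(|Y_j|+|Y_j'|).\] Then the set of shrinking pairs $(\alpha,\beta)$ is dense in $\mathcal{Y}\times\mathcal{Y}'$.
   Context: Setting: $Q,G$ are groups and $X=(X_n)_{n\in\mathbb{N}}$ is a sequence of finite sets with $|X_n|\ge2$, each with actions of $Q$ and $G$; $Q_n,G_n\subseteq\mathrm{Sym}(X_n)$ are the images and $A_n=\langle Q_n,G_n\rangle$. Assume for all $n$: (A1) $G,Q$ finitely generated; (A2) $Q$ perfect; (A3) $A_n$ is transitive on $X_n$ and generated by the $G_n$-conjugates of $Q_n$. $\mathcal{T}_j$ is the rooted tree of finite words $x_j\cdots x_k$ ($x_i\in X_i$), $\mathrm{Aut}(\mathcal{T}_j)$ its root-fixing automorphisms; sections $h|_u\in\mathrm{Aut}(\mathcal{T}_{j+\ell})$ (for $u$ of level $\ell$) are defined by $h(uv)=h(u)h|_u(v)$. $A_j$ acts by rooted automorphisms $a\cdot x_jx_{j+1}\cdots x_k=(ax_j)x_{j+1}\cdots x_k$ and is identified with its image; $q_j,g_j$ denote images of $q\in Q,g\in G$ in $A_j$. A point $o\in X_i$ is fixed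 in each $X_i$; $\mathcal{S}=\prod_{i\ge1}(X_i\setminus\{o\})$. For $\alpha\in\mathcal{S}$, $q\in Q$, $\tilde q^\alpha_{[j]}\in\mathrm{Aut}(\mathcal{T}_j)$ acts trivially on the first level with section at $x\in X_j$ equal to $\tilde q^\alpha_{[j+1]}$ if $x=o$, $q_{j+1}$ if $x=\alpha_j$, identity otherwise; analogously $\tilde g^\beta_{[j]}$ for $\beta\in\mathcal{S}$, $g\in G$. $\tilde Q^\alpha_{[j]},\tilde G^\beta_{[j]}$ are the sets of these elements, $\Gamma_j^{\alpha,\beta}=\langle A_j,\tilde Q^\alpha_{[j]},\tilde G^\beta_{[j]}\rangle$, and $\tilde B^{\alpha,\beta}_j=\tilde Q^\alpha_{[j]}\tilde G^\beta_{[j]}$. Stabilized sections: for $g\in\mathrm{Aut}(\mathcal{T}_j)$ and a vertex $u$, $\ell_u(g)$ is the length of the orbit of $u$ under $\langle g\rangle$ and $g\Vert_u=g^{\ell_u(g)}|_u$. A pair $(\alpha,\beta)\in\mathcal{S}^2$ is shrinking if $\alpha_j\ne\beta_j$ for all $j$ and for each $\gamma\in\Gamma_1^{\alpha,\beta}$ there is $k\in\mathbb{N}$ such that for every vertex $x$ of level $k$ of $\mathcal{T}_1$, $\gamma\Vert_x$ lies in $\tilde B^{\alpha,\beta}_{k+1}$ or in $A_{k+1}$. *)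

theory Defs
  imports "HOL-Analysis.Analysis" "HOL-Algebra.Group_Action" "HOL-Algebra.Multiplicative_Group"
    "HOL-Algebra.Generated_Groups"
begin

(* Levels are indexed by positive naturals n \<ge> 1; X n is the alphabet at level n.
   A vertex of the tree T_j is a word x_j x_{j+1} ... x_k, represented as a list whose
   i-th entry (0-based) lies in X (j+i). *)
definition wordT :: "(nat \<Rightarrow> 'x set) \<Rightarrow> nat \<Rightarrow> 'x list \<Rightarrow> bool" where
  "wordT X j w \<longleftrightarrow> (\<forall>i<length w. w ! i \<in> X (j + i))"

(* Rooted (root-fixing) automorphisms of T_j, normalised to be the identity on non-words. *)
definition Aut :: "(nat \<Rightarrow> 'x set) \<Rightarrow> nat \<Rightarrow> ('x list \<Rightarrow> 'x list) set" where
  "Aut X j = {h. (\<forall>w. wordT X j w \<longrightarrow> wordT X j (h w) \<and> length (h w) = length w)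
              \<and> (\<forall>u v. wordT X j (u @ v) \<longrightarrow> take (length u) (h (u @ v)) = h u)
              \<and> bij_betw h {w. wordT X j w} {w. wordT X j w}
              \<and> (\<forall>w. \<not> wordT X j w \<longrightarrow> h w = w)}"

definition autgrp :: "(nat \<Rightarrow> 'x set) \<Rightarrow> nat \<Rightarrow> ('x list \<Rightarrow> 'x list) monoid" where
  "autgrp X j = \<lparr>carrier = Aut X j, mult = (\<circ>), one = id\<rparr>"

(* Section h|_u \<in> Aut(T_{j+|u|}):  h(uv) = h(u) h|_u(v) *)
definition sect :: "(nat \<Rightarrow> 'x set) \<Rightarrow> nat \<Rightarrow> ('x list \<Rightarrow> 'x list) \<Rightarrow> 'x list \<Rightarrow> ('x list \<Rightarrow> 'x list)" where
  "sect X j h u = (\<lambda>v. if wordT X (j + length u) v then drop (length u) (h (u @ v)) else v)"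

definition orblen :: "('x list \<Rightarrow> 'x list) \<Rightarrow> 'x list \<Rightarrow> nat" where
  "orblen h u = (LEAST n. 0 < n \<and> (h ^^ n) u = u)"

definition stsect :: "(nat \<Rightarrow> 'x set) \<Rightarrow> nat \<Rightarrow> ('x list \<Rightarrow> 'x list) \<Rightarrow> 'x list \<Rightarrow> ('x list \<Rightarrow> 'x list)" where
  "stsect X j h u = sect X j (h ^^ orblen h u) u"

definition Agrp :: "(nat \<Rightarrow> 'x set) \<Rightarrow> (nat \<Rightarrow> 'q \<Rightarrow> 'x \<Rightarrow> 'x) \<Rightarrow> (nat \<Rightarrow> 'g \<Rightarrow> 'x \<Rightarrow> 'x)
    \<Rightarrow> ('q, 'c) monoid_scheme \<Rightarrow> ('g, 'd) monoid_scheme \<Rightarrow> nat \<Rightarrow> ('x \<Rightarrow> 'x) set" where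
  "Agrp X actQ actG Q G n = generate (BijGroup (X n)) (actQ n ` carrier Q \<union> actG n ` carrier G)"

definition maxord :: "(nat \<Rightarrow> 'x set) \<Rightarrow> (nat \<Rightarrow> 'q \<Rightarrow> 'x \<Rightarrow> 'x) \<Rightarrow> (nat \<Rightarrow> 'g \<Rightarrow> 'x \<Rightarrow> 'x)
    \<Rightarrow> ('q, 'c) monoid_scheme \<Rightarrow> ('g, 'd) monoid_scheme \<Rightarrow> nat \<Rightarrow> nat" where
  "maxord X actQ actG Q G j = Max (group.ord (BijGroup (X j)) ` Agrp X actQ actG Q G j)"

definition embA :: "(nat \<Rightarrow> 'x set) \<Rightarrow> nat \<Rightarrow> ('x \<Rightarrow> 'x) \<Rightarrow> 'x list \<Rightarrow> 'x list" where
  "embA X j a w = (if wordT X j w \<and> w \<noteq> [] then a (hd w) # tl w else w)"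

(* recursive description of  \<tilde>q^\<alpha>_[j]  where f n is the image q_n of q in A_n:
   trivial on the first level; section at ox is \<tilde>q^\<alpha>_[j+1], at \<alpha>_j it is q_{j+1},
   identity elsewhere *)
fun tilraw :: "(nat \<Rightarrow> 'x \<Rightarrow> 'x) \<Rightarrow> (nat \<Rightarrow> 'x) \<Rightarrow> (nat \<Rightarrow> 'x) \<Rightarrow> nat \<Rightarrow> 'x list \<Rightarrow> 'x list" where
  "tilraw f ox \<alpha> j [] = []"
| "tilraw f ox \<alpha> j (x # w) =
     (if x = ox j then x # tilraw f ox \<alpha> (Suc j) w
      else if x = \<alpha> j then x # (case w of [] \<Rightarrow> [] | y # w' \<Rightarrow> f (Suc j) y # w')
      else x # w)"

definition til :: "(nat \<Rightarrow> 'x set) \<Rightarrow> nat \<Rightarrow> (nat \<Rightarrow> 'x \<Rightarrow> 'x) \<Rightarrow> (nat \<Rightarrow> 'x) \<Rightarrow> (nat \<Rightarrow> 'x)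
    \<Rightarrow> 'x list \<Rightarrow> 'x list" where
  "til X j f ox \<alpha> = (\<lambda>w. if wordT X j w then tilraw f ox \<alpha> j w else w)"

definition Til :: "(nat \<Rightarrow> 'x set) \<Rightarrow> (nat \<Rightarrow> 'q \<Rightarrow> 'x \<Rightarrow> 'x) \<Rightarrow> ('q, 'c) monoid_scheme
    \<Rightarrow> (nat \<Rightarrow> 'x) \<Rightarrow> (nat \<Rightarrow> 'x) \<Rightarrow> nat \<Rightarrow> ('x list \<Rightarrow> 'x list) set" where
  "Til X act Q ox \<alpha> j = {til X j (\<lambda>n. act n q) ox \<alpha> | q. q \<in> carrier Q}"

definition Btil :: "(nat \<Rightarrow> 'x set) \<Rightarrow> (nat \<Rightarrow> 'q \<Rightarrow> 'x \<Rightarrow> 'x) \<Rightarrow> (nat \<Rightarrow> 'g \<Rightarrow> 'x \<Rightarrow> 'x)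
    \<Rightarrow> ('q, 'c) monoid_scheme \<Rightarrow> ('g, 'd) monoid_scheme \<Rightarrow> (nat \<Rightarrow> 'x)
    \<Rightarrow> (nat \<Rightarrow> 'x) \<Rightarrow> (nat \<Rightarrow> 'x) \<Rightarrow> nat \<Rightarrow> ('x list \<Rightarrow> 'x list) set" where
  "Btil X actQ actG Q G ox \<alpha> \<beta> j =
     {a \<circ> b | a b. a \<in> Til X actQ Q ox \<alpha> j \<and> b \<in> Til X actG G ox \<beta> j}"

definition Gam :: "(nat \<Rightarrow> 'x set) \<Rightarrow> (nat \<Rightarrow> 'q \<Rightarrow> 'x \<Rightarrow> 'x) \<Rightarrow> (nat \<Rightarrow> 'g \<Rightarrow> 'x \<Rightarrow> 'x)
    \<Rightarrow> ('q, 'c) monoid_scheme \<Rightarrow> ('g, 'd) monoid_scheme \<Rightarrow> (nat \<Rightarrow> 'x)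
    \<Rightarrow> (nat \<Rightarrow> 'x) \<Rightarrow> (nat \<Rightarrow> 'x) \<Rightarrow> nat \<Rightarrow> ('x list \<Rightarrow> 'x list) set" where
  "Gam X actQ actG Q G ox \<alpha> \<beta> j =
     generate (autgrp X j) (embA X j ` Agrp X actQ actG Q G j
                             \<union> Til X actQ Q ox \<alpha> j \<union> Til X actG G ox \<beta> j)"

definition inS :: "(nat \<Rightarrow> 'x set) \<Rightarrow> (nat \<Rightarrow> 'x) \<Rightarrow> (nat \<Rightarrow> 'x) \<Rightarrow> bool" where
  "inS X ox \<alpha> \<longleftrightarrow> (\<forall>i\<ge>1. \<alpha> i \<in> X i - {ox i})"

definition shrinking :: "(nat \<Rightarrow> 'x set) \<Rightarrow> (nat \<Rightarrow> 'q \<Rightarrow> 'x \<Rightarrow> 'x) \<Rightarrow> (nat \<Rightarrow> 'g \<Rightarrow> 'x \<Rightarrow> 'x)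
    \<Rightarrow> ('q, 'c) monoid_scheme \<Rightarrow> ('g, 'd) monoid_scheme \<Rightarrow> (nat \<Rightarrow> 'x)
    \<Rightarrow> (nat \<Rightarrow> 'x) \<Rightarrow> (nat \<Rightarrow> 'x) \<Rightarrow> bool" where
  "shrinking X actQ actG Q G ox \<alpha> \<beta> \<longleftrightarrow>
     inS X ox \<alpha> \<and> inS X ox \<beta> \<and> (\<forall>j\<ge>1. \<alpha> j \<noteq> \<beta> j) \<and>
     (\<forall>\<gamma> \<in> Gam X actQ actG Q G ox \<alpha> \<beta> 1. \<exists>k\<ge>1. \<forall>x. wordT X 1 x \<and> length x = k \<longrightarrow>
         stsect X 1 \<gamma> x \<in> Btil X actQ actG Q G ox \<alpha> \<beta> (k + 1)
                            \<union> embA X (k + 1) ` Agrp X actQ actG Q G (k + 1))"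

end

theory Submission
  imports Defs
begin

text \<open>Every element \<open>\<gamma>\<close> of \<open>\<Gamma>\<close> is a word in finitely many letters from \<open>A\<^sub>1\<close>,
  \<open>\<tilde>Q\<^sup>\<alpha>\<close> and \<open>\<tilde>G\<^sup>\<beta>\<close>, and as \<open>Q\<close> and \<open>G\<close> are finitely generated there are only
  countably many such words.  The stabilized section of \<open>\<gamma>\<close> at a vertex \<open>v\<close> of level \<open>k\<close>
  is the product of the sections of the letters at the vertices visited by the orbit of \<open>v\<close>.
  If \<open>o\<^sup>k\<close> is never visited, all these sections lie in \<open>A\<^sub>k\<^sub>+\<^sub>1\<close>; if neither
  \<open>o\<^sup>k\<^sup>-\<^sup>1\<alpha>\<^sub>k\<close> nor \<open>o\<^sup>k\<^sup>-\<^sup>1\<beta>\<^sub>k\<close> is visited, they lie in the commuting sets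
  \<open>\<tilde>Q\<^sup>\<alpha>\<close> and \<open>\<tilde>G\<^sup>\<beta>\<close>, so their product lies in \<open>\<tilde>B\<close>.  Otherwise \<open>\<alpha>\<^sub>k\<close> or
  \<open>\<beta>\<^sub>k\<close> is one of at most \<open>|\<gamma>|\<^sup>2 m\<^sub>k\<close> bad letters, which depend only on the values of
  \<open>\<alpha>, \<beta>\<close> below level \<open>k\<close>: the portrait of \<open>\<gamma>\<close> has its labels in the groups \<open>A\<close>,
  whose elements have order at most \<open>m\<^sub>k\<close>.  By the growth condition, every word has
  levels where its bad letters cannot exhaust \<open>Y\<^sub>k\<close> and \<open>Y'\<^sub>k\<close>, so choosing
  \<open>\<alpha>\<^sub>k, \<beta>\<^sub>k\<close> level by level outside the bad letters of an enumeration of all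
  words, and as prescribed on finitely many levels, gives a shrinking pair in every basic open set.\<close>

section \<open>Permutation groups\<close>

lemma (in group) countable_generate:
  assumes S: "S \<subseteq> carrier G" "countable S"
  shows "countable (generate G S)"
proof -
  let ?L = "lists (S \<union> m_inv G ` S)"
  have L: "set l \<subseteq> carrier G" if "l \<in> ?L" for l
    using that S(1) by auto
  have prod_append: "foldr (\<otimes>) (l1 @ l2) \<one> = foldr (\<otimes>) l1 \<one> \<otimes> foldr (\<otimes>) l2 \<one>"
    if "set l1 \<subseteq> carrier G" "set l2 \<subseteq> carrier G" for l1 l2
  proof -
    have closed: "set l \<subseteq> carrier G \<Longrightarrow> foldr (\<otimes>) l \<one> \<in> carrier G" for l
      by (induction l) auto
    show ?thesis using that by (induction l1) (auto simp: closed m_assoc)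
  qed
  have "generate G S \<subseteq> (\<lambda>l. foldr (\<otimes>) l \<one>) ` ?L"
  proof
    fix h assume "h \<in> generate G S"
    then show "h \<in> (\<lambda>l. foldr (\<otimes>) l \<one>) ` ?L"
    proof (induction rule: generate.induct)
      case one
      show ?case by (rule image_eqI[of _ _ "[]"]) auto
    next
      case (incl h)
      then show ?case using S(1) by (intro image_eqI[of _ _ "[h]"]) auto
    next
      case (inv h)
      then show ?case using S(1) by (intro image_eqI[of _ _ "[inv h]"]) auto
    next
      case (eng h1 h2)
      then obtain l1 l2 where "l1 \<in> ?L" "l2 \<in> ?L" "h1 = foldr (\<otimes>) l1 \<one>" "h2 = foldr (\<otimes>) l2 \<one>"
        by blast
      then show ?case using prod_append[OF L L] by (intro image_eqI[of _ _ "l1 @ l2"]) auto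
    qed
  qed
  moreover have "countable ((\<lambda>l. foldr (\<otimes>) l \<one>) ` ?L)" using S(2) by auto
  ultimately show ?thesis by (rule countable_subset)
qed

lemma finite_Bij: "finite S \<Longrightarrow> finite (Bij S)"
proof -
  assume "finite S"
  then have "finite (S \<rightarrow>\<^sub>E S)" by (intro finite_PiE) auto
  moreover have "Bij S \<subseteq> S \<rightarrow>\<^sub>E S"
    by (auto simp: PiE_iff dest: Bij_imp_funcset Bij_imp_extensional extensional_arb)
  ultimately show ?thesis by (rule finite_subset[rotated])
qed

lemma carrier_BijGroup [simp]: "carrier (BijGroup S) = Bij S"
  by (simp add: BijGroup_def)

lemma one_BijGroup_apply: "x \<in> S \<Longrightarrow> \<one>\<^bsub>BijGroup S\<^esub> x = x"
  by (simp add: BijGroup_def)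

lemma Bij_apply_in: "a \<in> Bij S \<Longrightarrow> x \<in> S \<Longrightarrow> a x \<in> S"
  by (auto simp: Bij_def bij_betw_def)

lemma BijGroup_mult_apply: "a \<in> Bij S \<Longrightarrow> b \<in> Bij S \<Longrightarrow> x \<in> S \<Longrightarrow> (a \<otimes>\<^bsub>BijGroup S\<^esub> b) x = a (b x)"
  by (simp add: BijGroup_def compose_def)

lemma (in group) card_range_pow_le_ord:
  assumes "finite (carrier G)" "a \<in> carrier G"
  shows "card (range (\<lambda>r::nat. f (a [^] r))) \<le> ord a"
proof -
  have "range (\<lambda>r::nat. f (a [^] r)) = f ` {a [^] x | x. x \<in> (UNIV :: nat set)}" by auto
  also have "\<dots> = f ` {a [^] x | x. x \<in> {0 .. ord a - 1}}"
    by (simp only: ord_elems[OF assms])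
  also have "\<dots> = (\<lambda>x. f (a [^] x)) ` {0 .. ord a - 1}" by blast
  finally have "card (range (\<lambda>r::nat. f (a [^] r))) \<le> card {0 .. ord a - 1}"
    by (metis card_image_le finite_atLeastAtMost)
  also have "\<dots> = ord a" using ord_ge_1[OF assms] by simp
  finally show ?thesis .
qed

section \<open>Rooted automorphisms and their sections\<close>

lemma wordT_Nil [simp]: "wordT X j []"
  by (simp add: wordT_def)

lemma wordT_Cons [simp]: "wordT X j (x # w) \<longleftrightarrow> x \<in> X j \<and> wordT X (Suc j) w"
  unfolding wordT_def by (auto simp: less_Suc_eq_0_disj)

lemma wordT_append: "wordT X j (u @ v) \<longleftrightarrow> wordT X j u \<and> wordT X (j + length u) v"
  by (induction u arbitrary: j) auto

lemma finite_words_length: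
  assumes "\<And>i. i \<ge> j \<Longrightarrow> finite (X i)"
  shows "finite {w. wordT X j w \<and> length w = k}"
proof (rule finite_subset)
  show "{w. wordT X j w \<and> length w = k} \<subseteq> {w. set w \<subseteq> (\<Union>i\<in>{j..<j+k}. X i) \<and> length w = k}"
    unfolding wordT_def by (auto simp: in_set_conv_nth intro!: bexI[of _ "j + _"])
  show "finite {w. set w \<subseteq> (\<Union>i\<in>{j..<j+k}. X i) \<and> length w = k}"
    using assms by (intro finite_lists_length_eq) auto
qed

lemma AutD:
  assumes "h \<in> Aut X j"
  shows "wordT X j w \<Longrightarrow> wordT X j (h w)" and "wordT X j w \<Longrightarrow> length (h w) = length w"
    and "wordT X j (u @ v) \<Longrightarrow> take (length u) (h (u @ v)) = h u"
    and "bij_betw h {w. wordT X j w} {w. wordT X j w}"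
    and "\<not> wordT X j w \<Longrightarrow> h w = w"
  using assms unfolding Aut_def by auto

lemma AutI:
  assumes "\<And>w. wordT X j w \<Longrightarrow> wordT X j (h w) \<and> length (h w) = length w"
    and "\<And>u v. wordT X j (u @ v) \<Longrightarrow> take (length u) (h (u @ v)) = h u"
    and "\<And>w. wordT X j w \<Longrightarrow> wordT X j (g w)"
    and "\<And>w. wordT X j w \<Longrightarrow> h (g w) = w" and "\<And>w. wordT X j w \<Longrightarrow> g (h w) = w"
    and "\<And>w. \<not> wordT X j w \<Longrightarrow> h w = w"
  shows "h \<in> Aut X j"
  unfolding Aut_def using assms by (auto intro!: bij_betw_byWitness[where f'=g])

lemma Aut_append: "h \<in> Aut X j \<Longrightarrow> wordT X j (u @ v) \<Longrightarrow> h (u @ v) = h u @ drop (length u) (h (u @ v))"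
  by (metis AutD(3) append_take_drop_id)

lemma inj_Aut:
  assumes "h \<in> Aut X j"
  shows "inj h"
proof (rule injI)
  fix a b assume eq: "h a = h b"
  then have "wordT X j a \<longleftrightarrow> wordT X j b" using AutD(1,5)[OF assms] by metis
  moreover have "inj_on h {w. wordT X j w}" using AutD(4)[OF assms] by (simp add: bij_betw_def)
  ultimately show "a = b" using eq AutD(5)[OF assms] by (cases "wordT X j a") (auto dest: inj_onD)
qed

lemma id_in_Aut: "id \<in> Aut X j"
  unfolding Aut_def by (auto simp: bij_betw_id)

lemma comp_in_Aut:
  assumes h: "h \<in> Aut X j" and h': "h' \<in> Aut X j"
  shows "h \<circ> h' \<in> Aut X j"
proof -
  have "take (length u) (h (h' (u @ v))) = h (h' u)" if w: "wordT X j (u @ v)" for u v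
  proof -
    have "h' (u @ v) = h' u @ drop (length u) (h' (u @ v))" using Aut_append[OF h' w] .
    moreover have "length (h' u) = length u" using AutD(2)[OF h'] w wordT_append by blast
    ultimately show ?thesis using AutD(1,3)[OF h] AutD(1)[OF h' w] by metis
  qed
  then show ?thesis
    unfolding Aut_def using AutD[OF h] AutD[OF h'] by (auto intro: bij_betw_trans)
qed

lemma funpow_in_Aut: "h \<in> Aut X j \<Longrightarrow> h ^^ n \<in> Aut X j"
  by (induction n) (simp_all add: id_in_Aut comp_in_Aut)

lemma autgrp_inv_eq:
  assumes "y \<in> Aut X j" "x \<circ> y = id" "y \<circ> x = id"
  shows "inv\<^bsub>autgrp X j\<^esub> x = y"
  unfolding m_inv_def autgrp_def
proof (simp, rule the_equality)
  show "y \<in> Aut X j \<and> x \<circ> y = id \<and> y \<circ> x = id" using assms by simp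
next
  fix z assume z: "z \<in> Aut X j \<and> x \<circ> z = id \<and> z \<circ> x = id"
  have "z = (y \<circ> x) \<circ> z" using assms(3) by simp
  also have "\<dots> = y" using z by (simp add: comp_assoc)
  finally show "z = y" .
qed

lemma Aut_funpow_returns:
  assumes h: "h \<in> Aut X j" and v: "wordT X j v" and fin: "\<And>i. i \<ge> j \<Longrightarrow> finite (X i)"
  obtains n where "n > 0" "(h ^^ n) v = v"
proof (rule funpow_inj_finite[OF inj_Aut[OF h]])
  have "{y. \<exists>n. y = (h ^^ n) v} \<subseteq> {w. wordT X j w \<and> length w = length v}"
    using AutD(1,2)[OF funpow_in_Aut[OF h] v] by auto
  then show "finite {y. \<exists>n. y = (h ^^ n) v}"
    using finite_words_length[OF fin] by (rule finite_subset)
qed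

lemma
  assumes "h \<in> Aut X j" "wordT X j v" "\<And>i. i \<ge> j \<Longrightarrow> finite (X i)"
  shows orblen_pos: "orblen h v > 0" and funpow_orblen: "(h ^^ orblen h v) v = v"
    and orblen_dvd: "(h ^^ s) v = v \<Longrightarrow> orblen h v dvd s"
proof -
  obtain n where "0 < n \<and> (h ^^ n) v = v" using Aut_funpow_returns[OF assms] by blast
  then have "0 < orblen h v \<and> (h ^^ orblen h v) v = v"
    unfolding orblen_def by (rule LeastI)
  then show pos: "orblen h v > 0" and per: "(h ^^ orblen h v) v = v" by auto
  assume "(h ^^ s) v = v"
  then have "(h ^^ (s mod orblen h v)) v = v" by (simp add: funpow_mod_eq per)
  moreover have "s mod orblen h v < orblen h v" using pos by simp
  ultimately have "s mod orblen h v = 0"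
    using not_less_Least[of "s mod orblen h v" "\<lambda>n. 0 < n \<and> (h ^^ n) v = v"]
    unfolding orblen_def by auto
  then show "orblen h v dvd s" by (simp add: mod_eq_0_iff_dvd)
qed

lemma funpow_period_shift:
  assumes "(h ^^ p) w = w" "p > 0"
  shows "(h ^^ t) w = (h ^^ (t + p * s - s)) ((h ^^ s) w)"
proof -
  have "s \<le> p * s" using assms(2) by simp
  then have eq: "t + p * s - s + s = t + p * s" by linarith
  have "(h ^^ (t + p * s - s)) ((h ^^ s) w) = (h ^^ (t + p * s - s + s)) w"
    by (simp only: funpow_add comp_apply)
  also have "\<dots> = (h ^^ t) ((h ^^ (p * s)) w)"
    unfolding eq by (simp only: funpow_add comp_apply)
  also have "(h ^^ (p * s)) w = w" using funpow_mod_eq[where f=h and n=p and x=w and m="p * s"] assms(1) by simp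
  finally show ?thesis by simp
qed

lemma funpow_snoc_nat_pow:
  assumes a: "a \<in> carrier (BijGroup S)" and label: "\<And>z. z \<in> S \<Longrightarrow> h (u @ [z]) = u @ [a z]"
    and z: "z \<in> S"
  shows "(h ^^ r) (u @ [z]) = u @ [(a [^]\<^bsub>BijGroup S\<^esub> r) z]"
proof (induction r)
  case 0
  then show ?case using z by (simp add: one_BijGroup_apply)
next
  case (Suc r)
  interpret B: group "BijGroup S" by (rule group_BijGroup)
  have ar: "a [^]\<^bsub>BijGroup S\<^esub> r \<in> Bij S" and ab: "a \<in> Bij S"
    using B.nat_pow_closed[OF a] a by simp_all
  have "(h ^^ Suc r) (u @ [z]) = u @ [a ((a [^]\<^bsub>BijGroup S\<^esub> r) z)]"
    using Suc label[OF Bij_apply_in[OF ar z]] by simp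
  also have "a ((a [^]\<^bsub>BijGroup S\<^esub> r) z) = (a [^]\<^bsub>BijGroup S\<^esub> Suc r) z"
    using B.nat_pow_Suc2[OF a, of r] BijGroup_mult_apply[OF ab ar z] by simp
  finally show ?case .
qed

lemma sect_id: "sect X j id v = id"
  by (rule ext) (simp add: sect_def)

lemma Aut_append_sect:
  assumes "h \<in> Aut X j" "wordT X j (u @ v)"
  shows "h (u @ v) = h u @ sect X j h u v"
  using Aut_append[OF assms] assms(2) by (simp add: sect_def wordT_append)

lemma sect_comp:
  assumes h: "h \<in> Aut X j" and h': "h' \<in> Aut X j" and v: "wordT X j v"
  shows "sect X j (h \<circ> h') v = sect X j h (h' v) \<circ> sect X j h' v"
proof
  fix w
  have lv: "length (h' v) = length v" using AutD(2)[OF h' v] .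
  show "sect X j (h \<circ> h') v w = (sect X j h (h' v) \<circ> sect X j h' v) w"
  proof (cases "wordT X (j + length v) w")
    case True
    then have vw: "wordT X j (v @ w)" using v by (simp add: wordT_append)
    define r where "r = drop (length v) (h' (v @ w))"
    have e: "h' (v @ w) = h' v @ r" using Aut_append[OF h' vw] r_def by simp
    have "wordT X (j + length v) r" using AutD(1)[OF h' vw] e lv by (simp add: wordT_append)
    then show ?thesis using True e lv by (simp add: sect_def r_def[symmetric])
  qed (simp add: sect_def lv)
qed

lemma sect_funpow_in:
  assumes h: "h \<in> Aut X j" and v: "wordT X j v"
    and "id \<in> M" and closed: "\<And>f g. f \<in> M \<Longrightarrow> g \<in> M \<Longrightarrow> f \<circ> g \<in> M"
    and "\<And>t. sect X j h ((h ^^ t) v) \<in> M"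
  shows "sect X j (h ^^ n) v \<in> M"
proof (induction n)
  case (Suc n)
  have "sect X j (h ^^ Suc n) v = sect X j h ((h ^^ n) v) \<circ> sect X j (h ^^ n) v"
    unfolding funpow.simps(2) by (rule sect_comp[OF h funpow_in_Aut[OF h] v])
  then show ?case using closed[OF assms(5) Suc] by (simp only:)
qed (simp only: funpow.simps(1) sect_id assms(3))

lemma embA_Nil [simp]: "embA X j a [] = []"
  by (simp add: embA_def)

lemma embA_Cons [simp]:
  "embA X j a (x # w) = (if x \<in> X j \<and> wordT X (Suc j) w then a x # w else x # w)"
  by (simp add: embA_def)

lemma embA_in_Aut:
  assumes "a \<in> Bij (X j)"
  shows "embA X j a \<in> Aut X j"
proof -
  have bij: "bij_betw a (X j) (X j)" using assms by (simp add: Bij_def)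
  let ?g = "embA X j (inv_into (X j) a)"
  show ?thesis
  proof (rule AutI[where g="?g"])
    fix w assume "wordT X j w"
    then show "wordT X j (embA X j a w) \<and> length (embA X j a w) = length w"
      using bij by (cases w) (auto dest: bij_betwE)
  next
    fix u v assume "wordT X j (u @ v)"
    then show "take (length u) (embA X j a (u @ v)) = embA X j a u"
      by (cases u) (auto simp: wordT_append)
  next
    fix w assume "wordT X j w"
    then show "wordT X j (?g w)"
      using bij by (cases w) (auto simp: bij_betw_def inv_into_into)
  next
    fix w assume "wordT X j w"
    then show "embA X j a (?g w) = w"
      using bij by (cases w) (auto simp: bij_betw_def inv_into_into f_inv_into_f)
  next
    fix w assume "wordT X j w"
    then show "?g (embA X j a w) = w"
      using bij by (cases w) (auto simp: bij_betw_def inv_into_f_f dest: bij_betwE)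
  qed (simp add: embA_def)
qed

lemma embA_mult:
  assumes "a \<in> Bij (X j)" "b \<in> Bij (X j)"
  shows "embA X j a \<circ> embA X j b = embA X j (a \<otimes>\<^bsub>BijGroup (X j)\<^esub> b)"
proof
  fix w
  have "bij_betw b (X j) (X j)" using assms by (simp add: Bij_def)
  then show "(embA X j a \<circ> embA X j b) w = embA X j (a \<otimes>\<^bsub>BijGroup (X j)\<^esub> b) w"
    using assms by (cases w) (auto simp: BijGroup_def compose_def dest: bij_betwE)
qed

lemma embA_one: "embA X j \<one>\<^bsub>BijGroup (X j)\<^esub> = id"
proof
  fix w show "embA X j \<one>\<^bsub>BijGroup (X j)\<^esub> w = id w"
    by (cases w) (auto simp: BijGroup_def)
qed

lemma embA_inv:
  assumes "a \<in> Bij (X j)"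
  shows "inv\<^bsub>autgrp X j\<^esub> (embA X j a) = embA X j (inv\<^bsub>BijGroup (X j)\<^esub> a)"
proof (rule autgrp_inv_eq)
  interpret B: group "BijGroup (X j)" by (rule group_BijGroup)
  have c: "a \<in> carrier (BijGroup (X j))" using assms by simp
  then have ai: "inv\<^bsub>BijGroup (X j)\<^esub> a \<in> Bij (X j)" using B.inv_closed by simp
  show "embA X j (inv\<^bsub>BijGroup (X j)\<^esub> a) \<in> Aut X j" using embA_in_Aut[where X=X and j=j, OF ai] .
  show "embA X j a \<circ> embA X j (inv\<^bsub>BijGroup (X j)\<^esub> a) = id"
    using embA_mult[where X=X and j=j, OF assms ai] B.r_inv[OF c] embA_one by simp
  show "embA X j (inv\<^bsub>BijGroup (X j)\<^esub> a) \<circ> embA X j a = id"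
    using embA_mult[where X=X and j=j, OF ai assms] B.l_inv[OF c] embA_one by simp
qed

lemma sect_embA:
  assumes "v \<noteq> []" "wordT X j v"
  shows "sect X j (embA X j a) v = id"
proof
  fix w show "sect X j (embA X j a) v w = id w"
    using assms by (cases v) (auto simp: sect_def wordT_append)
qed

section \<open>Directed automorphisms\<close>

definition o_word :: "(nat \<Rightarrow> 'x) \<Rightarrow> nat \<Rightarrow> nat \<Rightarrow> 'x list" where
  "o_word ox j k = map ox [j..<j+k]"

lemma o_word_0 [simp]: "o_word ox j 0 = []"
  by (simp add: o_word_def)

lemma o_word_Suc: "o_word ox j (Suc k) = ox j # o_word ox (Suc j) k"
  by (simp add: o_word_def upt_rec)

lemma length_o_word [simp]: "length (o_word ox j k) = k"
  by (simp add: o_word_def)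

lemma tilraw_wordT:
  assumes "\<And>n x. n > j \<Longrightarrow> x \<in> X n \<Longrightarrow> f n x \<in> X n" "wordT X j w"
  shows "wordT X j (tilraw f ox \<alpha> j w) \<and> length (tilraw f ox \<alpha> j w) = length w"
  using assms
proof (induction w arbitrary: j)
  case (Cons x w)
  show ?case
  proof (cases "x = ox j")
    case True
    then show ?thesis using Cons.prems Cons.IH[of "Suc j"] by auto
  next
    case False
    then show ?thesis using Cons.prems by (auto split: list.splits)
  qed
qed simp

lemma tilraw_comp:
  assumes "\<And>n x. n > j \<Longrightarrow> x \<in> X n \<Longrightarrow> f' n x \<in> X n" "wordT X j w"
  shows "tilraw f ox \<alpha> j (tilraw f' ox \<alpha> j w) = tilraw (\<lambda>n x. f n (f' n x)) ox \<alpha> j w"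
  using assms
proof (induction w arbitrary: j)
  case (Cons x w)
  show ?case
  proof (cases "x = ox j")
    case True
    then show ?thesis using Cons.prems Cons.IH[of "Suc j"] by auto
  next
    case False
    then show ?thesis using Cons.prems by (auto split: list.splits)
  qed
qed simp

lemma tilraw_cong:
  assumes "\<And>n x. n > j \<Longrightarrow> x \<in> X n \<Longrightarrow> f n x = f' n x" "wordT X j w"
  shows "tilraw f ox \<alpha> j w = tilraw f' ox \<alpha> j w"
  using assms
proof (induction w arbitrary: j)
  case (Cons x w)
  show ?case
  proof (cases "x = ox j")
    case True
    then show ?thesis using Cons.prems Cons.IH[of "Suc j"] by auto
  next
    case False
    then show ?thesis using Cons.prems by (auto split: list.splits)
  qed
qed simp

lemma tilraw_id: "tilraw (\<lambda>n x. x) ox \<alpha> j w = w"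
proof (induction w arbitrary: j)
  case (Cons x w)
  then show ?case by (cases w) auto
qed simp

lemma tilraw_take: "take (length u) (tilraw f ox \<alpha> j (u @ v)) = tilraw f ox \<alpha> j u"
proof (induction u arbitrary: j)
  case (Cons x u)
  show ?case
  proof (cases "x = ox j")
    case True
    then show ?thesis using Cons.IH[of "Suc j"] by auto
  next
    case False
    then show ?thesis by (auto split: list.splits simp: Cons_eq_append_conv)
  qed
qed simp

lemma tilraw_commute:
  assumes "\<And>i. i \<ge> j \<Longrightarrow> \<alpha> i \<noteq> \<beta> i"
  shows "tilraw f ox \<alpha> j (tilraw g ox \<beta> j w) = tilraw g ox \<beta> j (tilraw f ox \<alpha> j w)"
  using assms
proof (induction w arbitrary: j)
  case (Cons x w)
  show ?case
  proof (cases "x = ox j")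
    case True
    then show ?thesis using Cons.prems Cons.IH[of "Suc j"] by auto
  next
    case False
    then show ?thesis using Cons.prems[of j] by (auto split: list.splits)
  qed
qed simp

lemma tilraw_local:
  assumes "\<And>i. j \<le> i \<Longrightarrow> Suc i < j + length w \<Longrightarrow> \<alpha> i = \<alpha>' i"
  shows "tilraw f ox \<alpha> j w = tilraw f ox \<alpha>' j w"
  using assms
proof (induction w arbitrary: j)
  case (Cons x w)
  show ?case
  proof (cases "x = ox j")
    case True
    then show ?thesis using Cons.prems Cons.IH[of "Suc j"] by auto
  next
    case False
    then show ?thesis using Cons.prems[of j] by (cases w) auto
  qed
qed simp

lemma til_wordT:
  assumes "\<And>n x. n > j \<Longrightarrow> x \<in> X n \<Longrightarrow> f n x \<in> X n" "wordT X j w"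
  shows "wordT X j (til X j f ox \<alpha> w) \<and> length (til X j f ox \<alpha> w) = length w"
  using tilraw_wordT[OF assms] assms(2) by (simp add: til_def)

lemma til_in_Aut:
  assumes "\<And>n x. n > j \<Longrightarrow> x \<in> X n \<Longrightarrow> f n x \<in> X n \<and> g n x \<in> X n \<and> f n (g n x) = x \<and> g n (f n x) = x"
  shows "til X j f ox \<alpha> \<in> Aut X j"
proof (rule AutI[where g="til X j g ox \<alpha>"])
  have f: "\<And>n x. n > j \<Longrightarrow> x \<in> X n \<Longrightarrow> f n x \<in> X n" and g: "\<And>n x. n > j \<Longrightarrow> x \<in> X n \<Longrightarrow> g n x \<in> X n"
    using assms by auto
  fix w assume w: "wordT X j w"
  show "wordT X j (til X j f ox \<alpha> w) \<and> length (til X j f ox \<alpha> w) = length w"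
    using til_wordT[OF f w] .
  show "wordT X j (til X j g ox \<alpha> w)" using til_wordT[OF g w] by simp
  have "tilraw f ox \<alpha> j (tilraw g ox \<alpha> j w) = tilraw (\<lambda>n x. x) ox \<alpha> j w"
    using assms by (simp only: tilraw_comp[OF g w]) (rule tilraw_cong[OF _ w], simp)
  then show "til X j f ox \<alpha> (til X j g ox \<alpha> w) = w"
    using til_wordT[OF g w] w by (simp add: til_def tilraw_id)
  have "tilraw g ox \<alpha> j (tilraw f ox \<alpha> j w) = tilraw (\<lambda>n x. x) ox \<alpha> j w"
    using assms by (simp only: tilraw_comp[OF f w]) (rule tilraw_cong[OF _ w], simp)
  then show "til X j g ox \<alpha> (til X j f ox \<alpha> w) = w"
    using til_wordT[OF f w] w by (simp add: til_def tilraw_id)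
next
  fix u v assume "wordT X j (u @ v)"
  then show "take (length u) (til X j f ox \<alpha> (u @ v)) = til X j f ox \<alpha> u"
    using tilraw_take by (simp add: til_def wordT_append)
qed (simp add: til_def)

lemma til_comp:
  assumes "\<And>n x. n > j \<Longrightarrow> x \<in> X n \<Longrightarrow> f' n x \<in> X n"
  shows "til X j f ox \<alpha> \<circ> til X j f' ox \<alpha> = til X j (\<lambda>n x. f n (f' n x)) ox \<alpha>"
proof
  fix w show "(til X j f ox \<alpha> \<circ> til X j f' ox \<alpha>) w = til X j (\<lambda>n x. f n (f' n x)) ox \<alpha> w"
  proof (cases "wordT X j w")
    case True
    then show ?thesis using til_wordT[OF assms True] tilraw_comp[OF assms True] by (simp add: til_def)
  qed (simp add: til_def)
qed

lemma til_cong: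
  assumes "\<And>n x. n > j \<Longrightarrow> x \<in> X n \<Longrightarrow> f n x = f' n x"
  shows "til X j f ox \<alpha> = til X j f' ox \<alpha>"
  using tilraw_cong[OF assms] by (auto simp: til_def)

lemma til_id: "til X j (\<lambda>n x. x) ox \<alpha> = id"
  by (auto simp: til_def tilraw_id)

lemma til_commute:
  assumes "\<And>n x. n > j \<Longrightarrow> x \<in> X n \<Longrightarrow> f n x \<in> X n" "\<And>n x. n > j \<Longrightarrow> x \<in> X n \<Longrightarrow> g n x \<in> X n"
    and "\<And>i. i \<ge> j \<Longrightarrow> \<alpha> i \<noteq> \<beta> i"
  shows "til X j f ox \<alpha> \<circ> til X j g ox \<beta> = til X j g ox \<beta> \<circ> til X j f ox \<alpha>"
proof
  fix w show "(til X j f ox \<alpha> \<circ> til X j g ox \<beta>) w = (til X j g ox \<beta> \<circ> til X j f ox \<alpha>) w"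
  proof (cases "wordT X j w")
    case True
    then show ?thesis using til_wordT[OF assms(1) True] til_wordT[OF assms(2) True] tilraw_commute[OF assms(3)]
      by (simp add: til_def)
  qed (simp add: til_def)
qed

lemma sect_append:
  assumes h: "\<And>w. \<not> wordT X j w \<Longrightarrow> h w = w" and u: "wordT X j u"
  shows "sect X j h (u @ v) = sect X (j + length u) (sect X j h u) v"
proof
  fix w
  show "sect X j h (u @ v) w = sect X (j + length u) (sect X j h u) v w"
  proof (cases "wordT X (j + length u) v \<and> wordT X (j + length u + length v) w")
    case True
    then have w: "wordT X (j + length (u @ v)) w" and vw: "wordT X (j + length u) (v @ w)"
      by (simp_all add: wordT_append add.assoc)
    have "sect X j h (u @ v) w = drop (length u + length v) (h (u @ v @ w))"
      using w by (simp add: sect_def)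
    moreover have "sect X (j + length u) (sect X j h u) v w = drop (length v) (drop (length u) (h (u @ v @ w)))"
      using True vw by (simp add: sect_def)
    ultimately show ?thesis by (simp add: add.commute)
  next
    case False
    then have "\<not> wordT X j (u @ v @ w) \<or> \<not> wordT X (j + length u + length v) w"
      using u by (auto simp: wordT_append add.assoc)
    then show ?thesis
      using h by (auto simp: sect_def wordT_append add.assoc)
  qed
qed

lemma sect_til_Cons:
  assumes "x \<in> X j"
  shows "sect X j (til X j f ox \<alpha>) [x] =
    (if x = ox j then til X (Suc j) f ox \<alpha> else if x = \<alpha> j then embA X (Suc j) (f (Suc j)) else id)"
proof
  fix w
  show "sect X j (til X j f ox \<alpha>) [x] w =
    (if x = ox j then til X (Suc j) f ox \<alpha> else if x = \<alpha> j then embA X (Suc j) (f (Suc j)) else id) w"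
    using assms by (cases w) (auto simp: sect_def til_def embA_def)
qed

lemma sect_til_snoc:
  assumes "wordT X j (u @ [x])"
  shows "sect X j (til X j f ox \<alpha>) (u @ [x]) =
    (if u @ [x] = o_word ox j (Suc (length u)) then til X (Suc (j + length u)) f ox \<alpha>
     else if u @ [x] = o_word ox j (length u) @ [\<alpha> (j + length u)]
       then embA X (Suc (j + length u)) (f (Suc (j + length u)))
     else id)"
  using assms
proof (induction u arbitrary: j)
  case Nil
  then show ?case using sect_til_Cons[of x X j f ox \<alpha>] by (simp add: o_word_Suc)
next
  case (Cons y u)
  then have y: "y \<in> X j" and ux: "wordT X (Suc j) (u @ [x])" by auto
  have "sect X j (til X j f ox \<alpha>) ((y # u) @ [x]) = sect X (Suc j) (sect X j (til X j f ox \<alpha>) [y]) (u @ [x])"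
    using sect_append[of X j "til X j f ox \<alpha>" "[y]" "u @ [x]"] y by (simp add: til_def)
  also have "\<dots> = (if y = ox j then sect X (Suc j) (til X (Suc j) f ox \<alpha>) (u @ [x]) else id)"
    using sect_til_Cons[where X=X and j=j, OF y] sect_embA[OF _ ux] by (simp add: sect_id)
  finally show ?case
    using Cons.IH[OF ux] by (auto simp: o_word_Suc)
qed

lemma sect_til_Nil: "sect X j (til X j f ox \<alpha>) [] = til X j f ox \<alpha>"
  by (auto simp: sect_def til_def)

lemma sect_til_cases:
  assumes "wordT X j u"
  shows "sect X j (til X j f ox \<alpha>) u \<in>
    {til X (j + length u) f ox \<alpha>, embA X (j + length u) (f (j + length u)), id}"
proof (cases u rule: rev_cases)
  case (snoc u' x)
  then show ?thesis using sect_til_snoc[of X j u' x f ox \<alpha>] assms by simp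
qed (simp add: sect_til_Nil)

lemma til_singleton: "til X j f ox \<alpha> [z] = [z]"
  by (simp add: til_def)

section \<open>Level-wise group actions\<close>

locale level_action = group H for H :: "('h, 'e) monoid_scheme" (structure) +
  fixes X :: "nat \<Rightarrow> 'x set" and act :: "nat \<Rightarrow> 'h \<Rightarrow> 'x \<Rightarrow> 'x"
  assumes action: "\<And>n. n \<ge> 1 \<Longrightarrow> group_action H (X n) (act n)"
begin

lemma act_Bij: "n \<ge> 1 \<Longrightarrow> h \<in> carrier H \<Longrightarrow> act n h \<in> Bij (X n)"
  using group_action.bij_prop0[OF action] by blast

lemma act_in: "n \<ge> 1 \<Longrightarrow> h \<in> carrier H \<Longrightarrow> x \<in> X n \<Longrightarrow> act n h x \<in> X n"
  by (rule Bij_apply_in[OF act_Bij])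

lemma act_mult:
  "n \<ge> 1 \<Longrightarrow> x \<in> X n \<Longrightarrow> h \<in> carrier H \<Longrightarrow> h' \<in> carrier H \<Longrightarrow> act n h (act n h' x) = act n (h \<otimes> h') x"
  using group_action.composition_rule[OF action] by simp

lemma act_one: "n \<ge> 1 \<Longrightarrow> x \<in> X n \<Longrightarrow> act n \<one> x = x"
  using fun_cong[OF group_action.id_eq_one[OF action[of n]], of x] by simp

lemma til_act_in_Aut:
  assumes "h \<in> carrier H"
  shows "til X j (\<lambda>n. act n h) ox \<alpha> \<in> Aut X j"
proof (rule til_in_Aut[where g="\<lambda>n. act n (inv h)"])
  fix n x assume "j < n" "x \<in> X n"
  then have n: "n \<ge> 1" and x: "x \<in> X n" by auto
  show "act n h x \<in> X n \<and> act n (inv h) x \<in> X n \<and> act n h (act n (inv h) x) = x \<and> act n (inv h) (act n h x) = x"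
    using act_in[OF n _ x] act_mult[OF n x] act_mult[OF n act_in[OF n _ x]] act_one[OF n x] assms
    by simp
qed

lemma til_act_mult:
  assumes "h \<in> carrier H" "h' \<in> carrier H"
  shows "til X j (\<lambda>n. act n h) ox \<alpha> \<circ> til X j (\<lambda>n. act n h') ox \<alpha> = til X j (\<lambda>n. act n (h \<otimes> h')) ox \<alpha>"
proof -
  have "til X j (\<lambda>n. act n h) ox \<alpha> \<circ> til X j (\<lambda>n. act n h') ox \<alpha> = til X j (\<lambda>n x. act n h (act n h' x)) ox \<alpha>"
    using assms by (intro til_comp act_in) auto
  also have "\<dots> = til X j (\<lambda>n. act n (h \<otimes> h')) ox \<alpha>"
    using assms by (intro til_cong act_mult) auto
  finally show ?thesis .
qed

lemma til_act_one: "til X j (\<lambda>n. act n \<one>) ox \<alpha> = id"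
  using til_cong[of j X "\<lambda>n. act n \<one>" "\<lambda>n x. x"] act_one til_id by simp

lemma til_act_inv:
  assumes "h \<in> carrier H"
  shows "inv\<^bsub>autgrp X j\<^esub> (til X j (\<lambda>n. act n h) ox \<alpha>) = til X j (\<lambda>n. act n (inv h)) ox \<alpha>"
  using assms til_act_mult[of h "inv h"] til_act_mult[of "inv h" h] til_act_one
  by (intro autgrp_inv_eq til_act_in_Aut) auto

end

section \<open>Choosing sequences level by level\<close>

lemma less_of_mult_add_less_mult:
  fixes a b c :: nat
  assumes "c * (a + b) < a * b"
  shows "c < a \<and> c < b"
proof -
  have "a * b \<le> c * (a + b)" if "a \<le> c"
  proof -
    have "a * b \<le> c * b" using that by (rule mult_le_mono1)
    also have "\<dots> \<le> c * (a + b)" by simp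
    finally show ?thesis .
  qed
  moreover have "a * b \<le> c * (a + b)" if "b \<le> c"
  proof -
    have "a * b \<le> a * c" using that by simp
    also have "\<dots> \<le> c * (a + b)" by (simp add: algebra_simps)
    finally show ?thesis .
  qed
  ultimately show ?thesis using assms by (meson leD linorder_not_less)
qed

lemma exists_notin_small_UN:
  fixes n :: nat
  assumes "\<And>i. i < n \<Longrightarrow> finite (B i)" "(\<Sum>i<n. card (B i)) < card Y"
  obtains y where "y \<in> Y" "\<And>i. i < n \<Longrightarrow> y \<notin> B i"
proof -
  have "\<not> Y \<subseteq> (\<Union>i<n. B i)"
  proof
    assume "Y \<subseteq> (\<Union>i<n. B i)"
    then have "card Y \<le> card (\<Union>i<n. B i)" using assms(1) by (intro card_mono finite_UN_I) auto
    also have "\<dots> \<le> (\<Sum>i<n. card (B i))" by (rule card_UN_le) simp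
    finally show False using assms(2) by simp
  qed
  then show ?thesis using that by blast
qed

lemma exists_pair_avoiding:
  fixes n \<mu> :: nat and c :: "nat \<Rightarrow> nat"
  assumes "\<And>i. i < n \<Longrightarrow> finite (B i)" "\<And>i. i < n \<Longrightarrow> card (B i) \<le> c i * \<mu>"
    and "(\<Sum>i<n. Suc (c i)) * \<mu> < card Y" "(\<Sum>i<n. Suc (c i)) * \<mu> < card Y'"
  shows "\<exists>x\<in>Y. \<exists>y\<in>Y'. \<forall>i<n. x \<notin> B i \<and> y \<notin> B i"
proof -
  have "(\<Sum>i<n. card (B i)) \<le> (\<Sum>i<n. Suc (c i) * \<mu>)"
    by (intro sum_mono le_trans[OF assms(2)]) simp_all
  also have "\<dots> = (\<Sum>i<n. Suc (c i)) * \<mu>" by (simp add: sum_distrib_right)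
  finally have Y: "(\<Sum>i<n. card (B i)) < card Y" and Y': "(\<Sum>i<n. card (B i)) < card Y'"
    using assms(3,4) by linarith+
  obtain x where "x \<in> Y" "\<And>i. i < n \<Longrightarrow> x \<notin> B i"
    using exists_notin_small_UN[OF assms(1) Y] by blast
  moreover obtain y where "y \<in> Y'" "\<And>i. i < n \<Longrightarrow> y \<notin> B i"
    using exists_notin_small_UN[OF assms(1) Y'] by blast
  ultimately show ?thesis by blast
qed

lemma levelwise_choice:
  fixes Y Y' :: "nat \<Rightarrow> 'x set" and R :: "nat \<Rightarrow> (nat \<Rightarrow> 'x) \<Rightarrow> (nat \<Rightarrow> 'x) \<Rightarrow> 'x \<Rightarrow> 'x \<Rightarrow> bool"
  assumes ex: "\<And>k a b. k \<ge> 1 \<Longrightarrow> \<exists>x\<in>Y k. \<exists>y\<in>Y' k. R k a b x y"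
    and local: "\<And>k a b a' b' x y. k \<ge> 1 \<Longrightarrow> (\<And>j. j < k \<Longrightarrow> a j = a' j \<and> b j = b' j) \<Longrightarrow>
                  R k a b x y \<Longrightarrow> R k a' b' x y"
  shows "\<exists>\<alpha>\<in>(\<Pi>\<^sub>E i\<in>{1..}. Y i). \<exists>\<beta>\<in>(\<Pi>\<^sub>E i\<in>{1..}. Y' i). \<forall>k\<ge>1. R k \<alpha> \<beta> (\<alpha> k) (\<beta> k)"
proof -
  define P where "P p k r \<longleftrightarrow> (if k = 0 then r = (undefined, undefined) else
      fst r \<in> Y k \<and> snd r \<in> Y' k \<and> R k (fst \<circ> p) (snd \<circ> p) (fst r) (snd r))"
    for p :: "nat \<Rightarrow> 'x \<times> 'x" and k r
  have "\<exists>p. \<forall>k. P p k (p k)"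
  proof (rule dependent_wellorder_choice)
    show "P p k r = P p' k r" if "\<And>j. j < k \<Longrightarrow> p j = p' j" for r p p' k
      using local[where a="fst \<circ> p" and b="snd \<circ> p" and a'="fst \<circ> p'" and b'="snd \<circ> p'"]
        local[where a="fst \<circ> p'" and b="snd \<circ> p'" and a'="fst \<circ> p" and b'="snd \<circ> p"] that
      by (auto simp: P_def)
    show "\<exists>r. P p k r" for p k
      using ex[of k "fst \<circ> p" "snd \<circ> p"] by (cases "k = 0") (auto simp: P_def)
  qed
  then obtain p where p: "\<And>k. P p k (p k)" by blast
  have "fst \<circ> p \<in> (\<Pi>\<^sub>E i\<in>{1..}. Y i)" "snd \<circ> p \<in> (\<Pi>\<^sub>E i\<in>{1..}. Y' i)"
    using p by (auto simp: P_def PiE_iff extensional_def split: if_splits)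
  moreover have "\<forall>k\<ge>1. R k (fst \<circ> p) (snd \<circ> p) ((fst \<circ> p) k) ((snd \<circ> p) k)"
    using p by (auto simp: P_def split: if_splits)
  ultimately show ?thesis by blast
qed

lemma exists_large_level_outside:
  fixes \<mu> :: "nat \<Rightarrow> nat" and Y Y' :: "nat \<Rightarrow> 'x set"
  assumes F: "finite F" and \<mu>: "\<And>k. k \<ge> 1 \<Longrightarrow> \<mu> k \<ge> 1"
    and large: "\<And>n. \<exists>k\<ge>1. n * \<mu> k < card (Y k) \<and> n * \<mu> k < card (Y' k)"
  shows "\<exists>k\<ge>1. k \<notin> F \<and> n * \<mu> k < card (Y k) \<and> n * \<mu> k < card (Y' k)"
proof -
  define S where "S = (\<Sum>j\<in>F. card (Y j))"
  obtain k where k1: "k \<ge> 1" and k: "Suc n * Suc S * \<mu> k < card (Y k)" "Suc n * Suc S * \<mu> k < card (Y' k)"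
    using large[of "Suc n * Suc S"] by blast
  have "1 * Suc S * 1 \<le> Suc n * Suc S * \<mu> k" using \<mu>[OF k1] by (intro mult_le_mono) simp_all
  then have "k \<notin> F" using k(1) member_le_sum[of k F "\<lambda>j. card (Y j)"] F by (auto simp: S_def)
  moreover have "n * \<mu> k \<le> Suc n * Suc S * \<mu> k"
    using mult_le_mono[of n "Suc n" 1 "Suc S"] by (intro mult_le_mono1) simp
  ultimately show ?thesis using k1 k by (meson le_less_trans)
qed

lemma diagonal_avoidance:
  fixes Y Y' :: "nat \<Rightarrow> 'x set" and Bad :: "nat \<Rightarrow> (nat \<Rightarrow> 'x) \<Rightarrow> (nat \<Rightarrow> 'x) \<Rightarrow> nat \<Rightarrow> 'x set"
    and c \<mu> :: "nat \<Rightarrow> nat"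
  assumes Y: "\<And>k. k \<ge> 1 \<Longrightarrow> finite (Y k) \<and> Y k \<noteq> {} \<and> finite (Y' k) \<and> Y' k \<noteq> {}"
    and Bad_finite: "\<And>k a b i. k \<ge> 1 \<Longrightarrow> finite (Bad k a b i)"
    and Bad_card: "\<And>k a b i. k \<ge> 1 \<Longrightarrow> card (Bad k a b i) \<le> c i * \<mu> k"
    and Bad_local: "\<And>k a b a' b' i. k \<ge> 1 \<Longrightarrow> (\<And>j. j < k \<Longrightarrow> a j = a' j \<and> b j = b' j) \<Longrightarrow>
                      Bad k a b i = Bad k a' b' i"
    and \<mu>: "\<And>k. k \<ge> 1 \<Longrightarrow> \<mu> k \<ge> 1"
    and large: "\<And>n. \<exists>k\<ge>1. n * \<mu> k < card (Y k) \<and> n * \<mu> k < card (Y' k)"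
    and F: "finite F" and \<alpha>0: "\<alpha>0 \<in> (\<Pi>\<^sub>E i\<in>{1..}. Y i)" and \<beta>0: "\<beta>0 \<in> (\<Pi>\<^sub>E i\<in>{1..}. Y' i)"
  shows "\<exists>\<alpha>\<in>(\<Pi>\<^sub>E i\<in>{1..}. Y i). \<exists>\<beta>\<in>(\<Pi>\<^sub>E i\<in>{1..}. Y' i). (\<forall>i\<in>F. \<alpha> i = \<alpha>0 i \<and> \<beta> i = \<beta>0 i) \<and>
           (\<forall>i. \<exists>k\<ge>1. \<alpha> k \<notin> Bad k \<alpha> \<beta> i \<and> \<beta> k \<notin> Bad k \<alpha> \<beta> i)"
proof -
  define C where "C n = (\<Sum>i<n. Suc (c i))" for n
  \<comment> \<open>\<open>fits k n\<close>: at level \<open>k\<close> the bad sets of the first \<open>n\<close> indices can be avoided.\<close>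
  define fits where "fits k n \<longleftrightarrow> C n * \<mu> k < card (Y k) \<and> C n * \<mu> k < card (Y' k)" for k n
  define N where "N k = Max {n. fits k n}" for k
  have N: "fits k (N k)" "\<And>n. fits k n \<Longrightarrow> n \<le> N k" if k1: "k \<ge> 1" for k
  proof -
    have "n \<le> C n * \<mu> k" for n
      using sum_mono[of "{..<n}" "\<lambda>_. 1" "\<lambda>i. Suc (c i)"] mult_le_mono[OF _ \<mu>[OF k1], of n "C n"]
      by (simp add: C_def)
    then have "{n. fits k n} \<subseteq> {..card (Y k)}" by (auto simp: fits_def intro: less_imp_le_nat le_trans)
    then have fin: "finite {n. fits k n}" by (rule finite_subset) simp
    have "fits k 0" using Y[OF k1] by (simp add: fits_def C_def card_gt_0_iff)
    then show "fits k (N k)" unfolding N_def using Max_in[OF fin] by blast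
    show "\<And>n. fits k n \<Longrightarrow> n \<le> N k" unfolding N_def using Max_ge[OF fin] by blast
  qed
  define R where "R k a b x y \<longleftrightarrow> (k \<in> F \<longrightarrow> x = \<alpha>0 k \<and> y = \<beta>0 k) \<and>
      (k \<notin> F \<longrightarrow> (\<forall>i<N k. x \<notin> Bad k a b i \<and> y \<notin> Bad k a b i))" for k a b x y
  have "\<exists>x\<in>Y k. \<exists>y\<in>Y' k. R k a b x y" if k1: "k \<ge> 1" for k a b
  proof (cases "k \<in> F")
    case True
    then show ?thesis using \<alpha>0 \<beta>0 k1 by (auto simp: R_def)
  next
    case False
    from N(1)[OF k1] have "(\<Sum>i<N k. Suc (c i)) * \<mu> k < card (Y k)" "(\<Sum>i<N k. Suc (c i)) * \<mu> k < card (Y' k)"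
      by (simp_all add: fits_def C_def)
    then have "\<exists>x\<in>Y k. \<exists>y\<in>Y' k. \<forall>i<N k. x \<notin> Bad k a b i \<and> y \<notin> Bad k a b i"
      by (rule exists_pair_avoiding[OF Bad_finite[OF k1] Bad_card[OF k1]])
    then show ?thesis using False by (simp add: R_def)
  qed
  moreover have "R k a' b' x y" if "k \<ge> 1" "\<And>j. j < k \<Longrightarrow> a j = a' j \<and> b j = b' j" "R k a b x y"
    for k a b a' b' x y
    using that Bad_local[OF that(1,2)] by (simp add: R_def)
  ultimately have "\<exists>\<alpha>\<in>(\<Pi>\<^sub>E i\<in>{1..}. Y i). \<exists>\<beta>\<in>(\<Pi>\<^sub>E i\<in>{1..}. Y' i). \<forall>k\<ge>1. R k \<alpha> \<beta> (\<alpha> k) (\<beta> k)"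
    by (rule levelwise_choice)
  then obtain \<alpha> \<beta> where \<alpha>: "\<alpha> \<in> (\<Pi>\<^sub>E i\<in>{1..}. Y i)" and \<beta>: "\<beta> \<in> (\<Pi>\<^sub>E i\<in>{1..}. Y' i)"
    and R: "\<And>k. k \<ge> 1 \<Longrightarrow> R k \<alpha> \<beta> (\<alpha> k) (\<beta> k)"
    by blast
  have "\<alpha> i = \<alpha>0 i \<and> \<beta> i = \<beta>0 i" if "i \<in> F" for i
  proof (cases "i \<ge> 1")
    case False
    then show ?thesis using \<alpha> \<beta> \<alpha>0 \<beta>0 by (simp add: PiE_iff extensional_def)
  qed (use R that in \<open>simp add: R_def\<close>)
  moreover have "\<exists>k\<ge>1. \<alpha> k \<notin> Bad k \<alpha> \<beta> i \<and> \<beta> k \<notin> Bad k \<alpha> \<beta> i" for i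
  proof -
    obtain k where k1: "k \<ge> 1" and "k \<notin> F" "fits k (Suc i)"
      using exists_large_level_outside[OF F \<mu> large, of "C (Suc i)"] by (auto simp: fits_def)
    then show ?thesis using N(2)[OF k1] R[OF k1] by (fastforce simp: R_def Suc_le_eq)
  qed
  ultimately show ?thesis by (intro bexI[OF _ \<alpha>] bexI[OF _ \<beta>] conjI ballI allI) blast+
qed

section \<open>Density in products of discrete spaces\<close>

lemma product_discrete_openin_agree:
  assumes "openin (product_topology (\<lambda>i. discrete_topology (Y i)) I) U" "\<alpha> \<in> U"
  obtains F where "finite F" "\<And>\<alpha>'. \<alpha>' \<in> (\<Pi>\<^sub>E i\<in>I. Y i) \<Longrightarrow> (\<And>i. i \<in> F \<Longrightarrow> \<alpha>' i = \<alpha> i) \<Longrightarrow> \<alpha>' \<in> U"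
proof -
  obtain W where W: "\<alpha> \<in> (\<Pi>\<^sub>E i\<in>I. W i)" "finite {i. W i \<noteq> Y i}" "(\<Pi>\<^sub>E i\<in>I. W i) \<subseteq> U"
    using product_topology_open_contains_basis[OF assms] by auto
  show ?thesis
  proof (rule that[OF W(2)])
    fix \<alpha>' assume \<alpha>': "\<alpha>' \<in> (\<Pi>\<^sub>E i\<in>I. Y i)" "\<And>i. i \<in> {i. W i \<noteq> Y i} \<Longrightarrow> \<alpha>' i = \<alpha> i"
    have "\<alpha>' i \<in> W i" if i: "i \<in> I" for i
    proof (cases "W i = Y i")
      case True
      then show ?thesis using PiE_mem[OF \<alpha>'(1) i] by simp
    next
      case False
      then show ?thesis using PiE_mem[OF W(1) i] \<alpha>'(2)[of i] by simp
    qed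
    then have "\<alpha>' \<in> (\<Pi>\<^sub>E i\<in>I. W i)" using \<alpha>'(1) by (simp add: PiE_iff)
    then show "\<alpha>' \<in> U" using W(3) by blast
  qed
qed

lemma closure_of_prod_product_discrete:
  fixes Y Y' :: "'i \<Rightarrow> 'x set" and I :: "'i set"
  defines "T \<equiv> prod_topology (product_topology (\<lambda>i. discrete_topology (Y i)) I)
                              (product_topology (\<lambda>i. discrete_topology (Y' i)) I)"
  assumes approx: "\<And>F \<alpha> \<beta>. finite F \<Longrightarrow> \<alpha> \<in> (\<Pi>\<^sub>E i\<in>I. Y i) \<Longrightarrow> \<beta> \<in> (\<Pi>\<^sub>E i\<in>I. Y' i) \<Longrightarrow>
      \<exists>\<alpha>'\<in>(\<Pi>\<^sub>E i\<in>I. Y i). \<exists>\<beta>'\<in>(\<Pi>\<^sub>E i\<in>I. Y' i). (\<forall>i\<in>F. \<alpha>' i = \<alpha> i \<and> \<beta>' i = \<beta> i) \<and> P \<alpha>' \<beta>'"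
  shows "T closure_of {p \<in> topspace T. P (fst p) (snd p)} = topspace T"
proof -
  have "z \<in> T closure_of {p \<in> topspace T. P (fst p) (snd p)}" if z: "z \<in> topspace T" for z
    unfolding in_closure_of
  proof (intro conjI allI impI z)
    fix U assume U: "z \<in> U \<and> openin T U"
    obtain \<alpha> \<beta> where z_eq: "z = (\<alpha>, \<beta>)" by (cases z)
    have "\<exists>U1 U2. openin (product_topology (\<lambda>i. discrete_topology (Y i)) I) U1 \<and>
        openin (product_topology (\<lambda>i. discrete_topology (Y' i)) I) U2 \<and> \<alpha> \<in> U1 \<and> \<beta> \<in> U2 \<and> U1 \<times> U2 \<subseteq> U"
      using openin_prod_topology_alt[THEN iffD1, rule_format, of _ _ U \<alpha> \<beta>] U z_eq unfolding T_def by blast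
    then obtain U1 U2 where U12: "openin (product_topology (\<lambda>i. discrete_topology (Y i)) I) U1"
      "openin (product_topology (\<lambda>i. discrete_topology (Y' i)) I) U2" "\<alpha> \<in> U1" "\<beta> \<in> U2" "U1 \<times> U2 \<subseteq> U"
      by blast
    obtain F1 where F1: "finite F1"
      "\<And>\<alpha>'. \<alpha>' \<in> (\<Pi>\<^sub>E i\<in>I. Y i) \<Longrightarrow> (\<And>i. i \<in> F1 \<Longrightarrow> \<alpha>' i = \<alpha> i) \<Longrightarrow> \<alpha>' \<in> U1"
      using product_discrete_openin_agree[OF U12(1,3)] by blast
    obtain F2 where F2: "finite F2"
      "\<And>\<beta>'. \<beta>' \<in> (\<Pi>\<^sub>E i\<in>I. Y' i) \<Longrightarrow> (\<And>i. i \<in> F2 \<Longrightarrow> \<beta>' i = \<beta> i) \<Longrightarrow> \<beta>' \<in> U2"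
      using product_discrete_openin_agree[OF U12(2,4)] by blast
    have "\<alpha> \<in> (\<Pi>\<^sub>E i\<in>I. Y i)" "\<beta> \<in> (\<Pi>\<^sub>E i\<in>I. Y' i)"
      using z unfolding z_eq T_def by simp_all
    from approx[OF finite_UnI[OF F1(1) F2(1)] this]
    obtain \<alpha>' \<beta>' where \<alpha>': "\<alpha>' \<in> (\<Pi>\<^sub>E i\<in>I. Y i)" and \<beta>': "\<beta>' \<in> (\<Pi>\<^sub>E i\<in>I. Y' i)"
      and agree: "\<forall>i\<in>F1 \<union> F2. \<alpha>' i = \<alpha> i \<and> \<beta>' i = \<beta> i" and P: "P \<alpha>' \<beta>'"
      by blast
    have "\<alpha>' \<in> U1" using F1(2)[OF \<alpha>'] agree by blast
    moreover have "\<beta>' \<in> U2" using F2(2)[OF \<beta>'] agree by blast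
    ultimately have "(\<alpha>', \<beta>') \<in> U" using U12(5) by blast
    moreover have "(\<alpha>', \<beta>') \<in> {p \<in> topspace T. P (fst p) (snd p)}"
      using \<alpha>' \<beta>' P by (simp add: T_def)
    ultimately show "\<exists>y. y \<in> {p \<in> topspace T. P (fst p) (snd p)} \<and> y \<in> U" by blast
  qed
  then show ?thesis by (intro subset_antisym[OF closure_of_subset_topspace] subsetI)
qed

section \<open>Words in the generators of \<open>\<Gamma>\<close>\<close>

locale tree_actions =
  Q: level_action Q X actQ + G: level_action G X actG
  for Q :: "('q, 'c) monoid_scheme" and G :: "('g, 'd) monoid_scheme"
    and X :: "nat \<Rightarrow> 'x set" and actQ :: "nat \<Rightarrow> 'q \<Rightarrow> 'x \<Rightarrow> 'x" and actG :: "nat \<Rightarrow> 'g \<Rightarrow> 'x \<Rightarrow> 'x" +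
  fixes ox :: "nat \<Rightarrow> 'x"
  assumes finite_X: "\<And>n. n \<ge> 1 \<Longrightarrow> finite (X n)"
begin

abbreviation A :: "nat \<Rightarrow> ('x \<Rightarrow> 'x) set" where
  "A n \<equiv> Agrp X actQ actG Q G n"

abbreviation maxordA :: "nat \<Rightarrow> nat" where
  "maxordA n \<equiv> maxord X actQ actG Q G n"

lemma generators_subset_Bij:
  "n \<ge> 1 \<Longrightarrow> actQ n ` carrier Q \<union> actG n ` carrier G \<subseteq> carrier (BijGroup (X n))"
  using Q.act_Bij G.act_Bij by auto

lemma A_subset_Bij: "n \<ge> 1 \<Longrightarrow> A n \<subseteq> Bij (X n)"
  using group.generate_incl[OF group_BijGroup generators_subset_Bij] by (simp add: Agrp_def)

lemma actQ_in_A: "q \<in> carrier Q \<Longrightarrow> actQ n q \<in> A n"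
  unfolding Agrp_def by (rule generate.incl) auto

lemma actG_in_A: "g \<in> carrier G \<Longrightarrow> actG n g \<in> A n"
  unfolding Agrp_def by (rule generate.incl) auto

lemma one_in_A: "\<one>\<^bsub>BijGroup (X n)\<^esub> \<in> A n"
  unfolding Agrp_def by (rule generate.one)

lemma mult_in_A: "a \<in> A n \<Longrightarrow> b \<in> A n \<Longrightarrow> a \<otimes>\<^bsub>BijGroup (X n)\<^esub> b \<in> A n"
  unfolding Agrp_def by (rule generate.eng)

lemma inv_in_A: "n \<ge> 1 \<Longrightarrow> a \<in> A n \<Longrightarrow> inv\<^bsub>BijGroup (X n)\<^esub> a \<in> A n"
  using group.generate_m_inv_closed[OF group_BijGroup generators_subset_Bij] by (simp add: Agrp_def)

lemma ord_le_maxordA: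
  assumes "n \<ge> 1" "a \<in> A n"
  shows "group.ord (BijGroup (X n)) a \<le> maxordA n"
proof -
  have "finite (A n)"
    using A_subset_Bij[OF assms(1)] finite_Bij[OF finite_X[OF assms(1)]] by (rule finite_subset)
  then show ?thesis unfolding maxord_def using assms(2) by (intro Max_ge) auto
qed

lemma maxordA_pos:
  assumes "n \<ge> 1"
  shows "maxordA n \<ge> 1"
proof -
  have "finite (carrier (BijGroup (X n)))"
    using finite_Bij[OF finite_X[OF assms]] by simp
  then have "group.ord (BijGroup (X n)) \<one>\<^bsub>BijGroup (X n)\<^esub> \<ge> 1"
    using group.ord_ge_1[OF group_BijGroup] monoid.one_closed[OF group.is_monoid[OF group_BijGroup]] by blast
  then show ?thesis using ord_le_maxordA[OF assms one_in_A] by linarith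
qed

lemma card_range_pow_apply_le_maxordA:
  assumes "n \<ge> 1" "a \<in> A n"
  shows "card (range (\<lambda>r::nat. (a [^]\<^bsub>BijGroup (X n)\<^esub> r) z)) \<le> maxordA n"
proof -
  have "finite (carrier (BijGroup (X n)))" "a \<in> carrier (BijGroup (X n))"
    using finite_Bij[OF finite_X[OF assms(1)]] A_subset_Bij[OF assms(1)] assms(2) by auto
  then show ?thesis
    using group.card_range_pow_le_ord[OF group_BijGroup, of "X n" a "\<lambda>b. b z"] ord_le_maxordA[OF assms]
    by linarith
qed

lemma embA_A_closed:
  assumes "n \<ge> 1"
  shows "id \<in> embA X n ` A n" and "f \<in> embA X n ` A n \<Longrightarrow> g \<in> embA X n ` A n \<Longrightarrow> f \<circ> g \<in> embA X n ` A n"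
proof -
  show "id \<in> embA X n ` A n" using embA_one[of X n] one_in_A[of n] by (metis image_eqI)
  assume "f \<in> embA X n ` A n" "g \<in> embA X n ` A n"
  then obtain a b where "a \<in> A n" "b \<in> A n" "f = embA X n a" "g = embA X n b" by blast
  moreover have "embA X n a \<circ> embA X n b = embA X n (a \<otimes>\<^bsub>BijGroup (X n)\<^esub> b)"
    using A_subset_Bij[OF assms] \<open>a \<in> A n\<close> \<open>b \<in> A n\<close> by (intro embA_mult) auto
  ultimately show "f \<circ> g \<in> embA X n ` A n" using mult_in_A by blast
qed

text \<open>Letters are kept symbolic: a word over them does not depend on \<open>\<alpha>\<close> and \<open>\<beta>\<close>, so all words
  can be enumerated before \<open>\<alpha>\<close> and \<open>\<beta>\<close> are constructed.\<close>

definition letters :: "(('x \<Rightarrow> 'x) + ('q + 'g)) set" where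
  "letters = Inl ` A 1 \<union> Inr ` Inl ` carrier Q \<union> Inr ` Inr ` carrier G"

definition letter_aut :: "(nat \<Rightarrow> 'x) \<Rightarrow> (nat \<Rightarrow> 'x) \<Rightarrow> ('x \<Rightarrow> 'x) + ('q + 'g) \<Rightarrow> 'x list \<Rightarrow> 'x list" where
  "letter_aut \<alpha> \<beta> l = (case l of Inl a \<Rightarrow> embA X 1 a
     | Inr (Inl q) \<Rightarrow> til X 1 (\<lambda>n. actQ n q) ox \<alpha> | Inr (Inr g) \<Rightarrow> til X 1 (\<lambda>n. actG n g) ox \<beta>)"

primrec word_aut :: "(nat \<Rightarrow> 'x) \<Rightarrow> (nat \<Rightarrow> 'x) \<Rightarrow> (('x \<Rightarrow> 'x) + ('q + 'g)) list \<Rightarrow> 'x list \<Rightarrow> 'x list" where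
  "word_aut \<alpha> \<beta> [] = id"
| "word_aut \<alpha> \<beta> (l # ws) = letter_aut \<alpha> \<beta> l \<circ> word_aut \<alpha> \<beta> ws"

lemma word_aut_append: "word_aut \<alpha> \<beta> (ws @ ws') = word_aut \<alpha> \<beta> ws \<circ> word_aut \<alpha> \<beta> ws'"
  by (induction ws) auto

lemma lettersE:
  assumes "l \<in> letters"
  obtains (A) a where "a \<in> A 1" "l = Inl a"
    | (Q) q where "q \<in> carrier Q" "l = Inr (Inl q)"
    | (G) g where "g \<in> carrier G" "l = Inr (Inr g)"
  using assms unfolding letters_def by blast

lemma letter_aut_in_Aut: "l \<in> letters \<Longrightarrow> letter_aut \<alpha> \<beta> l \<in> Aut X 1"
  by (erule lettersE) (use A_subset_Bij[of 1] embA_in_Aut Q.til_act_in_Aut G.til_act_in_Aut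
      in \<open>auto simp: letter_aut_def\<close>)

lemma word_aut_in_Aut: "ws \<in> lists letters \<Longrightarrow> word_aut \<alpha> \<beta> ws \<in> Aut X 1"
proof (induction ws)
  case (Cons l ws)
  then show ?case unfolding word_aut.simps(2) by (intro comp_in_Aut letter_aut_in_Aut) auto
qed (simp add: id_in_Aut)

lemma inv_letter_aut:
  assumes "l \<in> letters"
  shows "\<exists>l'\<in>letters. inv\<^bsub>autgrp X 1\<^esub> (letter_aut \<alpha> \<beta> l) = letter_aut \<alpha> \<beta> l'"
  using assms
proof (cases rule: lettersE)
  case (A a)
  then show ?thesis
    using embA_inv[of a X 1] A_subset_Bij[of 1] inv_in_A[of 1 a]
    by (intro bexI[of _ "Inl (inv\<^bsub>BijGroup (X 1)\<^esub> a)"]) (auto simp: letter_aut_def letters_def)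
next
  case (Q q)
  then show ?thesis
    using Q.til_act_inv[of q 1 ox \<alpha>]
    by (intro bexI[of _ "Inr (Inl (inv\<^bsub>Q\<^esub> q))"]) (auto simp: letter_aut_def letters_def)
next
  case (G g)
  then show ?thesis
    using G.til_act_inv[of g 1 ox \<beta>]
    by (intro bexI[of _ "Inr (Inr (inv\<^bsub>G\<^esub> g))"]) (auto simp: letter_aut_def letters_def)
qed

lemma image_letter_aut:
  "letter_aut \<alpha> \<beta> ` letters = embA X 1 ` A 1 \<union> Til X actQ Q ox \<alpha> 1 \<union> Til X actG G ox \<beta> 1"
  by (simp add: letters_def image_Un image_image letter_aut_def Til_def Setcompr_eq_image)

lemma Gam_eq_word_aut:
  assumes "\<gamma> \<in> Gam X actQ actG Q G ox \<alpha> \<beta> 1"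
  shows "\<exists>ws\<in>lists letters. \<gamma> = word_aut \<alpha> \<beta> ws"
  using assms unfolding Gam_def
proof (induction rule: generate.induct)
  case one
  then show ?case by (intro bexI[of _ "[]"]) (auto simp: autgrp_def)
next
  case (incl h)
  then have "h \<in> letter_aut \<alpha> \<beta> ` letters" by (simp only: image_letter_aut)
  then obtain l where "l \<in> letters" "h = letter_aut \<alpha> \<beta> l" by blast
  then show ?case by (intro bexI[of _ "[l]"]) auto
next
  case (inv h)
  then have "h \<in> letter_aut \<alpha> \<beta> ` letters" by (simp only: image_letter_aut)
  then obtain l where "l \<in> letters" "h = letter_aut \<alpha> \<beta> l" by blast
  then obtain l' where "l' \<in> letters" "inv\<^bsub>autgrp X 1\<^esub> h = letter_aut \<alpha> \<beta> l'"
    using inv_letter_aut by blast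
  then show ?case by (intro bexI[of _ "[l']"]) auto
next
  case (eng h1 h2)
  then obtain ws1 ws2 where "ws1 \<in> lists letters" "ws2 \<in> lists letters"
    "h1 = word_aut \<alpha> \<beta> ws1" "h2 = word_aut \<alpha> \<beta> ws2" by blast
  moreover have "h1 \<otimes>\<^bsub>autgrp X 1\<^esub> h2 = h1 \<circ> h2" by (simp add: autgrp_def)
  ultimately have "h1 \<otimes>\<^bsub>autgrp X 1\<^esub> h2 = word_aut \<alpha> \<beta> (ws1 @ ws2)" by (simp only: word_aut_append)
  moreover have "ws1 @ ws2 \<in> lists letters" using \<open>ws1 \<in> lists letters\<close> \<open>ws2 \<in> lists letters\<close> by simp
  ultimately show ?case by blast
qed

lemma countable_letters:
  assumes "\<exists>S. finite S \<and> S \<subseteq> carrier Q \<and> generate Q S = carrier Q"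
    and "\<exists>S. finite S \<and> S \<subseteq> carrier G \<and> generate G S = carrier G"
  shows "countable letters"
proof -
  have "countable (carrier Q)" "countable (carrier G)"
    using assms Q.countable_generate G.countable_generate countable_finite by metis+
  moreover have "countable (A 1)"
    using A_subset_Bij[of 1] finite_Bij[OF finite_X[of 1]] by (auto intro: countable_finite finite_subset)
  ultimately show ?thesis unfolding letters_def by auto
qed

definition labels_in_A :: "('x list \<Rightarrow> 'x list) \<Rightarrow> bool" where
  "labels_in_A h \<longleftrightarrow> (\<forall>u. wordT X 1 u \<longrightarrow>
     (\<exists>a\<in>A (Suc (length u)). \<forall>z\<in>X (Suc (length u)). h (u @ [z]) = h u @ [a z]))"

lemma labels_in_A_id: "labels_in_A id"
  unfolding labels_in_A_def by (intro allI impI bexI[OF _ one_in_A] ballI) (simp add: one_BijGroup_apply)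

lemma labels_in_A_comp:
  assumes h: "labels_in_A h" and h': "h' \<in> Aut X 1" "labels_in_A h'"
  shows "labels_in_A (h \<circ> h')"
  unfolding labels_in_A_def
proof (intro allI impI)
  fix u assume u: "wordT X 1 u"
  obtain a' where a': "a' \<in> A (Suc (length u))" "\<And>z. z \<in> X (Suc (length u)) \<Longrightarrow> h' (u @ [z]) = h' u @ [a' z]"
    using h'(2) u unfolding labels_in_A_def by blast
  have "wordT X 1 (h' u)" "length (h' u) = length u" using AutD(1,2)[OF h'(1) u] by auto
  then obtain a where a: "a \<in> A (Suc (length u))"
    "\<And>z. z \<in> X (Suc (length u)) \<Longrightarrow> h (h' u @ [z]) = h (h' u) @ [a z]"
    using h unfolding labels_in_A_def by metis
  have Bij: "a \<in> Bij (X (Suc (length u)))" "a' \<in> Bij (X (Suc (length u)))"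
    using A_subset_Bij a(1) a'(1) by auto
  show "\<exists>b\<in>A (Suc (length u)). \<forall>z\<in>X (Suc (length u)). (h \<circ> h') (u @ [z]) = (h \<circ> h') u @ [b z]"
  proof (intro bexI ballI)
    fix z assume "z \<in> X (Suc (length u))"
    then show "(h \<circ> h') (u @ [z]) = (h \<circ> h') u @ [(a \<otimes>\<^bsub>BijGroup (X (Suc (length u)))\<^esub> a') z]"
      using a(2) a'(2) Bij_apply_in[OF Bij(2)] BijGroup_mult_apply[OF Bij] by simp
  qed (rule mult_in_A[OF a(1) a'(1)])
qed

lemma labels_in_A_funpow: "h \<in> Aut X 1 \<Longrightarrow> labels_in_A h \<Longrightarrow> labels_in_A (h ^^ n)"
  by (induction n) (simp_all add: labels_in_A_id labels_in_A_comp funpow_in_Aut)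

lemma labels_in_A_til:
  assumes "til X 1 f ox \<alpha> \<in> Aut X 1" "\<And>n. n \<ge> 1 \<Longrightarrow> f n \<in> A n"
  shows "labels_in_A (til X 1 f ox \<alpha>)"
  unfolding labels_in_A_def
proof (intro allI impI)
  fix u assume u: "wordT X 1 u"
  let ?n = "Suc (length u)"
  have app: "til X 1 f ox \<alpha> (u @ [z]) = til X 1 f ox \<alpha> u @ sect X 1 (til X 1 f ox \<alpha>) u [z]"
    if "z \<in> X ?n" for z
    using that u by (intro Aut_append_sect[OF assms(1)]) (simp add: wordT_append)
  have "sect X 1 (til X 1 f ox \<alpha>) u \<in> {til X ?n f ox \<alpha>, embA X ?n (f ?n), id}"
    using sect_til_cases[OF u, of f ox \<alpha>] by simp
  then show "\<exists>a\<in>A ?n. \<forall>z\<in>X ?n. til X 1 f ox \<alpha> (u @ [z]) = til X 1 f ox \<alpha> u @ [a z]"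
  proof (elim insertE emptyE)
    assume "sect X 1 (til X 1 f ox \<alpha>) u = til X ?n f ox \<alpha>"
    then show ?thesis
      using app by (intro bexI[OF _ one_in_A] ballI) (simp add: til_singleton one_BijGroup_apply)
  next
    assume "sect X 1 (til X 1 f ox \<alpha>) u = embA X ?n (f ?n)"
    then show ?thesis using app assms(2)[of ?n] by (intro bexI[of _ "f ?n"] ballI) auto
  next
    assume "sect X 1 (til X 1 f ox \<alpha>) u = id"
    then show ?thesis using app by (intro bexI[OF _ one_in_A] ballI) (simp add: one_BijGroup_apply)
  qed
qed

lemma letter_labels_in_A:
  assumes "l \<in> letters"
  shows "labels_in_A (letter_aut \<alpha> \<beta> l)"
  using assms
proof (cases rule: lettersE)
  case (A a)
  show ?thesis
    unfolding labels_in_A_def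
  proof (intro allI impI)
    fix u assume u: "wordT X 1 u"
    show "\<exists>b\<in>A (Suc (length u)). \<forall>z\<in>X (Suc (length u)).
            letter_aut \<alpha> \<beta> l (u @ [z]) = letter_aut \<alpha> \<beta> l u @ [b z]"
    proof (cases u)
      case Nil
      then show ?thesis using A by (intro bexI[of _ a]) (auto simp: letter_aut_def)
    next
      case (Cons x u')
      then show ?thesis
        using A u one_in_A by (intro bexI[of _ "\<one>\<^bsub>BijGroup (X (Suc (length u)))\<^esub>"])
          (auto simp: letter_aut_def wordT_append one_BijGroup_apply)
    qed
  qed
next
  case (Q q)
  show ?thesis
    unfolding Q(2) letter_aut_def sum.case
    by (rule labels_in_A_til[OF Q.til_act_in_Aut[OF Q(1)] actQ_in_A[OF Q(1)]])
next
  case (G g)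
  show ?thesis
    unfolding G(2) letter_aut_def sum.case
    by (rule labels_in_A_til[OF G.til_act_in_Aut[OF G(1)] actG_in_A[OF G(1)]])
qed

lemma word_labels_in_A: "ws \<in> lists letters \<Longrightarrow> labels_in_A (word_aut \<alpha> \<beta> ws)"
proof (induction ws)
  case (Cons l ws)
  then have l: "l \<in> letters" and ws: "ws \<in> lists letters" by simp_all
  show ?case
    unfolding word_aut.simps(2)
    by (rule labels_in_A_comp[OF letter_labels_in_A[OF l] word_aut_in_Aut[OF ws] Cons.IH[OF ws]])
qed (simp add: labels_in_A_id)

lemma fibre_subset_last_letter_orbit:
  assumes h: "h \<in> Aut X 1" "labels_in_A h" and c: "c \<in> Aut X 1"
    and u: "wordT X 1 u" "length u = m" "c u = o_word ox 1 m" and z0: "z0 \<in> X (Suc m)"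
  obtains a where "a \<in> A (Suc m)"
    "{x. \<exists>t. c ((h ^^ t) (u @ [z0])) = o_word ox 1 m @ [x]} \<subseteq>
       (\<lambda>z. last (c (u @ [z]))) ` range (\<lambda>r::nat. (a [^]\<^bsub>BijGroup (X (Suc m))\<^esub> r) z0)"
proof -
  define L where "L = orblen h u"
  have "(h ^^ L) u = u" unfolding L_def by (rule funpow_orblen[OF h(1) u(1) finite_X])
  then obtain a where a: "a \<in> A (Suc m)" "\<And>z. z \<in> X (Suc m) \<Longrightarrow> (h ^^ L) (u @ [z]) = u @ [a z]"
    using labels_in_A_funpow[OF h, of L] u unfolding labels_in_A_def by force
  have aB: "a \<in> carrier (BijGroup (X (Suc m)))" using A_subset_Bij a(1) by auto
  \<comment> \<open>Only the powers \<open>h ^^ (L * r)\<close> fix the prefix \<open>u\<close>, and they act below \<open>u\<close> as \<open>a [^] r\<close>.\<close>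
  have "x \<in> (\<lambda>z. last (c (u @ [z]))) ` range (\<lambda>r::nat. (a [^]\<^bsub>BijGroup (X (Suc m))\<^esub> r) z0)"
    if t: "c ((h ^^ t) (u @ [z0])) = o_word ox 1 m @ [x]" for x t
  proof -
    have "(c \<circ> h ^^ t) u = take (length u) ((c \<circ> h ^^ t) (u @ [z0]))"
      using AutD(3)[OF comp_in_Aut[OF c funpow_in_Aut[OF h(1)]], of u "[z0]"] u z0 by (simp add: wordT_append)
    also have "\<dots> = c u" using t u by simp
    finally have "(h ^^ t) u = u" using inj_Aut[OF c] by (simp add: inj_eq)
    then have "L dvd t" unfolding L_def using orblen_dvd[OF h(1) u(1) finite_X] by blast
    then obtain r where "t = L * r" by blast
    then have "(h ^^ t) (u @ [z0]) = u @ [(a [^]\<^bsub>BijGroup (X (Suc m))\<^esub> r) z0]"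
      using funpow_snoc_nat_pow[OF aB a(2) z0] by (simp add: funpow_mult)
    then show ?thesis using t by (auto intro!: image_eqI[of _ _ "(a [^]\<^bsub>BijGroup (X (Suc m))\<^esub> r) z0"])
  qed
  then show ?thesis using that[OF a(1)] by blast
qed

lemma card_orbit_fibre:
  assumes h: "h \<in> Aut X 1" "labels_in_A h" and c: "c \<in> Aut X 1"
    and w: "wordT X 1 w" "length w = Suc m"
  shows "finite {x. \<exists>t. c ((h ^^ t) w) = o_word ox 1 m @ [x]}"
    and "card {x. \<exists>t. c ((h ^^ t) w) = o_word ox 1 m @ [x]} \<le> maxordA (Suc m)"
proof -
  let ?S = "\<lambda>w. {x. \<exists>t. c ((h ^^ t) w) = o_word ox 1 m @ [x]}"
  have "finite (?S w) \<and> card (?S w) \<le> maxordA (Suc m)"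
  proof (cases "?S w = {}")
    case False
    then obtain t0 x0 where x0: "c ((h ^^ t0) w) = o_word ox 1 m @ [x0]" by blast
    have "wordT X 1 ((h ^^ t0) w)" "length ((h ^^ t0) w) = Suc m"
      using AutD(1,2)[OF funpow_in_Aut[OF h(1)] w(1)] w(2) by auto
    then obtain u z0 where y0: "(h ^^ t0) w = u @ [z0]" and u: "wordT X 1 u" "length u = m"
      and z0: "z0 \<in> X (Suc m)"
      by (cases "(h ^^ t0) w" rule: rev_cases) (auto simp: wordT_append)
    have "c u = o_word ox 1 m"
      using AutD(3)[OF c, of u "[z0]"] x0 y0 u by (simp add: wordT_append z0)
    then obtain a where a: "a \<in> A (Suc m)"
      and sub: "?S (u @ [z0]) \<subseteq> (\<lambda>z. last (c (u @ [z]))) ` range (\<lambda>r::nat. (a [^]\<^bsub>BijGroup (X (Suc m))\<^esub> r) z0)"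
      using fibre_subset_last_letter_orbit[OF h c u(1,2) _ z0] by blast
    let ?R = "range (\<lambda>r::nat. (a [^]\<^bsub>BijGroup (X (Suc m))\<^esub> r) z0)"
    have "?S w \<subseteq> ?S (u @ [z0])"
    proof
      fix x assume "x \<in> ?S w"
      then obtain t where "c ((h ^^ t) w) = o_word ox 1 m @ [x]" by blast
      moreover have "(h ^^ t) w = (h ^^ (t + orblen h w * t0 - t0)) (u @ [z0])"
        unfolding y0[symmetric]
        by (rule funpow_period_shift[OF funpow_orblen[OF h(1) w(1) finite_X] orblen_pos[OF h(1) w(1) finite_X]])
      ultimately show "x \<in> ?S (u @ [z0])" by auto
    qed
    then have S: "?S w \<subseteq> (\<lambda>z. last (c (u @ [z]))) ` ?R" using sub by (rule order_trans)
    have "?R \<subseteq> X (Suc m)"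
      using Bij_apply_in[OF _ z0] A_subset_Bij a
        monoid.nat_pow_closed[OF group.is_monoid[OF group_BijGroup], of a "X (Suc m)"] by auto
    then have R: "finite ?R" using finite_X by (rule finite_subset) simp
    have "card (?S w) \<le> card ((\<lambda>z. last (c (u @ [z]))) ` ?R)" by (rule card_mono[OF finite_imageI[OF R] S])
    also have "\<dots> \<le> card ?R" by (rule card_image_le[OF R])
    also have "\<dots> \<le> maxordA (Suc m)" by (rule card_range_pow_apply_le_maxordA[OF _ a]) simp
    finally show ?thesis using finite_subset[OF S finite_imageI[OF R]] by simp
  qed simp
  then show "finite (?S w)" "card (?S w) \<le> maxordA (Suc m)" by simp_all
qed

text \<open>The vertices at which the letters of \<open>ws\<close> are evaluated when the stabilized section of
  \<open>word_aut \<alpha> \<beta> ws\<close> at \<open>v\<close> is expanded into sections of letters.\<close>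

definition trail :: "(nat \<Rightarrow> 'x) \<Rightarrow> (nat \<Rightarrow> 'x) \<Rightarrow> (('x \<Rightarrow> 'x) + ('q + 'g)) list \<Rightarrow> 'x list \<Rightarrow> 'x list set" where
  "trail \<alpha> \<beta> ws v = {word_aut \<alpha> \<beta> (drop (Suc i) ws) ((word_aut \<alpha> \<beta> ws ^^ t) v) | i t. i < length ws}"

lemma trail_wordT:
  assumes "ws \<in> lists letters" "wordT X 1 v" "p \<in> trail \<alpha> \<beta> ws v"
  shows "wordT X 1 p \<and> length p = length v"
proof -
  obtain i t where p: "p = word_aut \<alpha> \<beta> (drop (Suc i) ws) ((word_aut \<alpha> \<beta> ws ^^ t) v)"
    using assms(3) unfolding trail_def by blast
  have "drop (Suc i) ws \<in> lists letters" using assms(1) by (auto dest: in_set_dropD)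
  then show ?thesis
    unfolding p using AutD(1,2)[OF funpow_in_Aut[OF word_aut_in_Aut[OF assms(1)]] assms(2)]
      AutD(1,2)[OF word_aut_in_Aut] by metis
qed

lemma trail_funpow:
  assumes ws: "ws \<in> lists letters" and v: "wordT X 1 v"
  shows "trail \<alpha> \<beta> ws ((word_aut \<alpha> \<beta> ws ^^ s) v) = trail \<alpha> \<beta> ws v"
proof -
  let ?h = "word_aut \<alpha> \<beta> ws"
  have h: "?h \<in> Aut X 1" by (rule word_aut_in_Aut[OF ws])
  have shift: "(?h ^^ t) v = (?h ^^ (t + orblen ?h v * s - s)) ((?h ^^ s) v)" for t
    by (rule funpow_period_shift[OF funpow_orblen[OF h v finite_X] orblen_pos[OF h v finite_X]])
  have unshift: "(?h ^^ t) ((?h ^^ s) v) = (?h ^^ (t + s)) v" for t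
    by (simp add: funpow_add)
  show ?thesis
    unfolding trail_def
  proof (intro equalityI subsetI)
    fix p assume "p \<in> {word_aut \<alpha> \<beta> (drop (Suc i) ws) ((?h ^^ t) ((?h ^^ s) v)) | i t. i < length ws}"
    then obtain i t where "i < length ws" "p = word_aut \<alpha> \<beta> (drop (Suc i) ws) ((?h ^^ (t + s)) v)"
      unfolding unshift by blast
    then show "p \<in> {word_aut \<alpha> \<beta> (drop (Suc i) ws) ((?h ^^ t) v) | i t. i < length ws}" by blast
  next
    fix p assume "p \<in> {word_aut \<alpha> \<beta> (drop (Suc i) ws) ((?h ^^ t) v) | i t. i < length ws}"
    then obtain i t where "i < length ws" "p = word_aut \<alpha> \<beta> (drop (Suc i) ws) ((?h ^^ t) v)" by blast
    then show "p \<in> {word_aut \<alpha> \<beta> (drop (Suc i) ws) ((?h ^^ t) ((?h ^^ s) v)) | i t. i < length ws}"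
      unfolding mem_Collect_eq using shift[of t]
      by (intro exI[of _ i] exI[of _ "t + orblen ?h v * s - s"]) simp
  qed
qed

lemma length_letter_aut: "length (letter_aut \<alpha> \<beta> l w) = length w"
proof -
  have "length (tilraw f ox \<alpha> j w) = length w" for f \<alpha> j
    by (induction w arbitrary: j) (auto split: list.split)
  then show ?thesis by (auto simp: letter_aut_def embA_def til_def split: sum.split)
qed

lemma length_word_aut: "length (word_aut \<alpha> \<beta> ws w) = length w"
  by (induction ws) (simp_all add: length_letter_aut)

lemma word_aut_local:
  assumes "\<And>i. i \<le> m \<Longrightarrow> \<alpha> i = \<alpha>' i \<and> \<beta> i = \<beta>' i" "length w = Suc m"
  shows "word_aut \<alpha> \<beta> ws w = word_aut \<alpha>' \<beta>' ws w"
proof -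
  have letter: "letter_aut \<alpha> \<beta> l w' = letter_aut \<alpha>' \<beta>' l w'" if "length w' = Suc m" for l w'
  proof -
    have "tilraw f ox \<alpha> 1 w' = tilraw f ox \<alpha>' 1 w'" "tilraw f ox \<beta> 1 w' = tilraw f ox \<beta>' 1 w'" for f
      using assms(1) that by (auto intro!: tilraw_local)
    then show ?thesis by (auto simp: letter_aut_def til_def split: sum.split)
  qed
  show ?thesis
  proof (induction ws)
    case (Cons l ws)
    have "word_aut \<alpha> \<beta> (l # ws) w = letter_aut \<alpha> \<beta> l (word_aut \<alpha> \<beta> ws w)" by simp
    also have "\<dots> = letter_aut \<alpha>' \<beta>' l (word_aut \<alpha>' \<beta>' ws w)"
      unfolding Cons.IH by (rule letter) (simp only: length_word_aut assms(2))
    also have "\<dots> = word_aut \<alpha>' \<beta>' (l # ws) w" by simp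
    finally show ?case .
  qed simp
qed

lemma length_funpow_word_aut: "length ((word_aut \<alpha> \<beta> ws ^^ t) w) = length w"
  by (induction t) (simp_all only: funpow.simps comp_apply id_apply length_word_aut)

lemma trail_local:
  assumes agree: "\<And>i. i \<le> m \<Longrightarrow> \<alpha> i = \<alpha>' i \<and> \<beta> i = \<beta>' i" and w: "length w = Suc m"
  shows "trail \<alpha> \<beta> ws w = trail \<alpha>' \<beta>' ws w"
proof -
  have len: "length ((word_aut \<alpha>' \<beta>' ws ^^ t) w) = Suc m" for t
    using length_funpow_word_aut w by simp
  have pow: "(word_aut \<alpha> \<beta> ws ^^ t) w = (word_aut \<alpha>' \<beta>' ws ^^ t) w" for t
  proof (induction t)
    case (Suc t)
    have "(word_aut \<alpha> \<beta> ws ^^ Suc t) w = word_aut \<alpha> \<beta> ws ((word_aut \<alpha> \<beta> ws ^^ t) w)" by simp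
    also have "\<dots> = word_aut \<alpha>' \<beta>' ws ((word_aut \<alpha>' \<beta>' ws ^^ t) w)"
      unfolding Suc.IH by (rule word_aut_local[OF agree len])
    also have "\<dots> = (word_aut \<alpha>' \<beta>' ws ^^ Suc t) w" by simp
    finally show ?case .
  qed simp
  have "word_aut \<alpha> \<beta> (drop (Suc i) ws) ((word_aut \<alpha> \<beta> ws ^^ t) w) =
        word_aut \<alpha>' \<beta>' (drop (Suc i) ws) ((word_aut \<alpha>' \<beta>' ws ^^ t) w)" for i t
    unfolding pow by (rule word_aut_local[OF agree len])
  then show ?thesis unfolding trail_def by (simp only:)
qed

definition bad_letters :: "nat \<Rightarrow> (nat \<Rightarrow> 'x) \<Rightarrow> (nat \<Rightarrow> 'x) \<Rightarrow> (('x \<Rightarrow> 'x) + ('q + 'g)) list \<Rightarrow> 'x set" where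
  "bad_letters k \<alpha> \<beta> ws = {x. \<exists>w. wordT X 1 w \<and> length w = k \<and>
     o_word ox 1 k \<in> trail \<alpha> \<beta> ws w \<and> o_word ox 1 (k - 1) @ [x] \<in> trail \<alpha> \<beta> ws w}"

lemma bad_letters_subset:
  assumes "ws \<in> lists letters"
  shows "bad_letters (Suc m) \<alpha> \<beta> ws \<subseteq> X (Suc m)"
proof
  fix x assume "x \<in> bad_letters (Suc m) \<alpha> \<beta> ws"
  then obtain w where "wordT X 1 w" "o_word ox 1 m @ [x] \<in> trail \<alpha> \<beta> ws w"
    unfolding bad_letters_def by auto
  then have "wordT X 1 (o_word ox 1 m @ [x])" using trail_wordT[OF assms] by blast
  then show "x \<in> X (Suc m)" by (simp add: wordT_append)
qed

lemma bad_letters_local: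
  assumes "\<And>i. i \<le> m \<Longrightarrow> \<alpha> i = \<alpha>' i \<and> \<beta> i = \<beta>' i"
  shows "bad_letters (Suc m) \<alpha> \<beta> ws = bad_letters (Suc m) \<alpha>' \<beta>' ws"
proof -
  have "trail \<alpha> \<beta> ws w = trail \<alpha>' \<beta>' ws w" if "length w = Suc m" for w
    using trail_local[OF assms that] .
  then show ?thesis unfolding bad_letters_def by (intro Collect_cong ex_cong1 conj_cong refl) simp_all
qed

lemma card_fibre_letters:
  fixes m :: nat
  assumes h: "h \<in> Aut X 1" "labels_in_A h" and c: "c \<in> Aut X 1" "c' \<in> Aut X 1"
  defines "S \<equiv> {x. \<exists>w t. wordT X 1 w \<and> length w = Suc m \<and>
                   c w = o_word ox 1 (Suc m) \<and> c' ((h ^^ t) w) = o_word ox 1 m @ [x]}"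
  shows "finite S \<and> card S \<le> maxordA (Suc m)"
proof (cases "S = {}")
  case False
  then obtain w0 where w0: "wordT X 1 w0" "length w0 = Suc m" "c w0 = o_word ox 1 (Suc m)"
    unfolding S_def by blast
  let ?F = "{x. \<exists>t. c' ((h ^^ t) w0) = o_word ox 1 m @ [x]}"
  have sub: "S \<subseteq> ?F"
  proof
    fix x assume "x \<in> S"
    then obtain w t where "c w = o_word ox 1 (Suc m)" "c' ((h ^^ t) w) = o_word ox 1 m @ [x]"
      unfolding S_def by blast
    moreover have "w = w0" using injD[OF inj_Aut[OF c(1)]] calculation(1) w0(3) by metis
    ultimately show "x \<in> ?F" by blast
  qed
  have "finite ?F" "card ?F \<le> maxordA (Suc m)"
    using card_orbit_fibre[OF h c(2) w0(1,2)] by auto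
  then show ?thesis using finite_subset[OF sub] card_mono[OF _ sub] by fastforce
qed simp

lemma card_bad_letters:
  assumes ws: "ws \<in> lists letters"
  shows "card (bad_letters (Suc m) \<alpha> \<beta> ws) \<le> length ws * length ws * maxordA (Suc m)"
proof -
  let ?h = "word_aut \<alpha> \<beta> ws" and ?n = "length ws"
  let ?c = "\<lambda>i. word_aut \<alpha> \<beta> (drop (Suc i) ws)"
  have h: "?h \<in> Aut X 1" by (rule word_aut_in_Aut[OF ws])
  have c: "?c i \<in> Aut X 1" for i using ws by (intro word_aut_in_Aut) (auto dest: in_set_dropD)
  define B where "B i i' = {x. \<exists>w t. wordT X 1 w \<and> length w = Suc m \<and>
     ?c i w = o_word ox 1 (Suc m) \<and> ?c i' ((?h ^^ t) w) = o_word ox 1 m @ [x]}" for i i'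
  have B: "finite (B i i') \<and> card (B i i') \<le> maxordA (Suc m)" for i i'
    unfolding B_def by (rule card_fibre_letters[OF h word_labels_in_A[OF ws] c c])
  have "bad_letters (Suc m) \<alpha> \<beta> ws \<subseteq> (\<Union>i<?n. \<Union>i'<?n. B i i')"
  proof
    fix x assume "x \<in> bad_letters (Suc m) \<alpha> \<beta> ws"
    then obtain w where w: "wordT X 1 w" "length w = Suc m"
      "o_word ox 1 (Suc m) \<in> trail \<alpha> \<beta> ws w" "o_word ox 1 m @ [x] \<in> trail \<alpha> \<beta> ws w"
      unfolding bad_letters_def by auto
    from w(3) obtain i t where i: "i < ?n" "?c i ((?h ^^ t) w) = o_word ox 1 (Suc m)"
      unfolding trail_def by auto
    have "o_word ox 1 m @ [x] \<in> trail \<alpha> \<beta> ws ((?h ^^ t) w)"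
      using w(1,4) trail_funpow[OF ws] by simp
    then obtain i' t' where i': "i' < ?n" "?c i' ((?h ^^ t') ((?h ^^ t) w)) = o_word ox 1 m @ [x]"
      unfolding trail_def by auto
    have "wordT X 1 ((?h ^^ t) w)" "length ((?h ^^ t) w) = Suc m"
      using AutD(1,2)[OF funpow_in_Aut[OF h] w(1)] w(2) by auto
    then have "x \<in> B i i'" unfolding B_def using i(2) i'(2) by blast
    then show "x \<in> (\<Union>i<?n. \<Union>i'<?n. B i i')" using i(1) i'(1) by blast
  qed
  then have "card (bad_letters (Suc m) \<alpha> \<beta> ws) \<le> card (\<Union>i<?n. \<Union>i'<?n. B i i')"
    using B by (intro card_mono) auto
  also have "\<dots> \<le> (\<Sum>i<?n. card (\<Union>i'<?n. B i i'))" by (rule card_UN_le) simp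
  also have "\<dots> \<le> (\<Sum>i<?n. \<Sum>i'<?n. card (B i i'))" by (intro sum_mono card_UN_le) simp
  also have "\<dots> \<le> (\<Sum>i<?n. \<Sum>i'<?n. maxordA (Suc m))" using B by (intro sum_mono) auto
  finally show ?thesis by simp
qed

lemma sect_word_aut_in:
  assumes ws: "ws \<in> lists letters" and y: "wordT X 1 y"
    and M: "id \<in> M" "\<And>f g. f \<in> M \<Longrightarrow> g \<in> M \<Longrightarrow> f \<circ> g \<in> M"
    and sects: "\<And>i. i < length ws \<Longrightarrow> sect X 1 (letter_aut \<alpha> \<beta> (ws ! i)) (word_aut \<alpha> \<beta> (drop (Suc i) ws) y) \<in> M"
  shows "sect X 1 (word_aut \<alpha> \<beta> ws) y \<in> M"
  using ws sects
proof (induction ws rule: lists.induct)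
  case (Cons l ws)
  have eq: "sect X 1 (word_aut \<alpha> \<beta> (l # ws)) y =
        sect X 1 (letter_aut \<alpha> \<beta> l) (word_aut \<alpha> \<beta> ws y) \<circ> sect X 1 (word_aut \<alpha> \<beta> ws) y"
    unfolding word_aut.simps(2) using Cons.hyps by (intro sect_comp letter_aut_in_Aut word_aut_in_Aut y)
  have "sect X 1 (letter_aut \<alpha> \<beta> l) (word_aut \<alpha> \<beta> ws y) \<in> M"
    using Cons.prems[of 0] by simp
  moreover have "sect X 1 (word_aut \<alpha> \<beta> ws) y \<in> M"
    using Cons.prems[of "Suc _"] by (intro Cons.IH) auto
  ultimately show ?case unfolding eq by (rule M(2))
qed (simp add: sect_id M(1))

lemma stsect_word_aut_in:
  assumes ws: "ws \<in> lists letters" and v: "wordT X 1 v"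
    and M: "id \<in> M" "\<And>f g. f \<in> M \<Longrightarrow> g \<in> M \<Longrightarrow> f \<circ> g \<in> M"
    and sects: "\<And>l p. l \<in> letters \<Longrightarrow> p \<in> trail \<alpha> \<beta> ws v \<Longrightarrow> sect X 1 (letter_aut \<alpha> \<beta> l) p \<in> M"
  shows "stsect X 1 (word_aut \<alpha> \<beta> ws) v \<in> M"
  unfolding stsect_def
proof (rule sect_funpow_in[OF word_aut_in_Aut[OF ws] v M])
  fix t
  show "sect X 1 (word_aut \<alpha> \<beta> ws) ((word_aut \<alpha> \<beta> ws ^^ t) v) \<in> M"
  proof (rule sect_word_aut_in[OF ws _ M])
    show "wordT X 1 ((word_aut \<alpha> \<beta> ws ^^ t) v)"
      using AutD(1)[OF funpow_in_Aut[OF word_aut_in_Aut[OF ws]] v] .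
    fix i assume "i < length ws"
    then show "sect X 1 (letter_aut \<alpha> \<beta> (ws ! i)) (word_aut \<alpha> \<beta> (drop (Suc i) ws) ((word_aut \<alpha> \<beta> ws ^^ t) v)) \<in> M"
      using ws by (intro sects) (auto simp: trail_def)
  qed
qed

lemma id_in_Btil: "id \<in> Btil X actQ actG Q G ox \<alpha> \<beta> n"
proof -
  have "id = til X n (\<lambda>k. actQ k \<one>\<^bsub>Q\<^esub>) ox \<alpha> \<circ> til X n (\<lambda>k. actG k \<one>\<^bsub>G\<^esub>) ox \<beta>"
    by (simp add: Q.til_act_one G.til_act_one)
  then show ?thesis unfolding Btil_def Til_def by blast
qed

lemma til_actQ_in_Btil:
  assumes "q \<in> carrier Q"
  shows "til X n (\<lambda>k. actQ k q) ox \<alpha> \<in> Btil X actQ actG Q G ox \<alpha> \<beta> n"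
proof -
  have "til X n (\<lambda>k. actQ k q) ox \<alpha> = til X n (\<lambda>k. actQ k q) ox \<alpha> \<circ> til X n (\<lambda>k. actG k \<one>\<^bsub>G\<^esub>) ox \<beta>"
    by (simp add: G.til_act_one)
  then show ?thesis unfolding Btil_def Til_def using assms by blast
qed

lemma til_actG_in_Btil:
  assumes "g \<in> carrier G"
  shows "til X n (\<lambda>k. actG k g) ox \<beta> \<in> Btil X actQ actG Q G ox \<alpha> \<beta> n"
proof -
  have "til X n (\<lambda>k. actG k g) ox \<beta> = til X n (\<lambda>k. actQ k \<one>\<^bsub>Q\<^esub>) ox \<alpha> \<circ> til X n (\<lambda>k. actG k g) ox \<beta>"
    by (simp add: Q.til_act_one)
  then show ?thesis unfolding Btil_def Til_def using assms by blast
qed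

lemma Btil_comp_closed:
  assumes ab: "\<And>i. i \<ge> n \<Longrightarrow> \<alpha> i \<noteq> \<beta> i"
    and f: "f \<in> Btil X actQ actG Q G ox \<alpha> \<beta> n" and g: "g \<in> Btil X actQ actG Q G ox \<alpha> \<beta> n"
  shows "f \<circ> g \<in> Btil X actQ actG Q G ox \<alpha> \<beta> n"
proof -
  let ?q = "\<lambda>q. til X n (\<lambda>k. actQ k q) ox \<alpha>" and ?g = "\<lambda>g. til X n (\<lambda>k. actG k g) ox \<beta>"
  obtain q1 g1 q2 g2 where qg: "q1 \<in> carrier Q" "g1 \<in> carrier G" "q2 \<in> carrier Q" "g2 \<in> carrier G"
    and fg: "f = ?q q1 \<circ> ?g g1" "g = ?q q2 \<circ> ?g g2"
    using f g unfolding Btil_def Til_def by blast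
  have commute: "?g g1 \<circ> ?q q2 = ?q q2 \<circ> ?g g1"
    using ab qg(2,3) by (intro til_commute[symmetric] Q.act_in G.act_in) auto
  have "f \<circ> g = ?q q1 \<circ> (?g g1 \<circ> ?q q2) \<circ> ?g g2" unfolding fg by (simp add: comp_assoc)
  also have "\<dots> = (?q q1 \<circ> ?q q2) \<circ> (?g g1 \<circ> ?g g2)" unfolding commute by (simp add: comp_assoc)
  also have "\<dots> = ?q (q1 \<otimes>\<^bsub>Q\<^esub> q2) \<circ> ?g (g1 \<otimes>\<^bsub>G\<^esub> g2)"
    using qg by (simp add: Q.til_act_mult G.til_act_mult)
  finally show ?thesis unfolding Btil_def Til_def using qg by blast
qed

lemma sect_letter_cases:
  assumes l: "l \<in> letters" and p: "wordT X 1 p" "length p = Suc m"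
  obtains (A) "sect X 1 (letter_aut \<alpha> \<beta> l) p = id"
  | (Q) q where "q \<in> carrier Q" "sect X 1 (letter_aut \<alpha> \<beta> l) p =
      (if p = o_word ox 1 (Suc m) then til X (Suc (Suc m)) (\<lambda>k. actQ k q) ox \<alpha>
       else if p = o_word ox 1 m @ [\<alpha> (Suc m)] then embA X (Suc (Suc m)) (actQ (Suc (Suc m)) q) else id)"
  | (G) g where "g \<in> carrier G" "sect X 1 (letter_aut \<alpha> \<beta> l) p =
      (if p = o_word ox 1 (Suc m) then til X (Suc (Suc m)) (\<lambda>k. actG k g) ox \<beta>
       else if p = o_word ox 1 m @ [\<beta> (Suc m)] then embA X (Suc (Suc m)) (actG (Suc (Suc m)) g) else id)"
proof -
  obtain u x where px: "p = u @ [x]" and u: "length u = m"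
    using p(2) by (cases p rule: rev_cases) auto
  have "p \<noteq> []" using p(2) by auto
  from l show ?thesis
  proof (cases rule: lettersE)
    case (A a)
    then show ?thesis using that(1) sect_embA[OF \<open>p \<noteq> []\<close> p(1)] by (simp add: letter_aut_def)
  next
    case (Q q)
    then show ?thesis
      using that(2)[OF Q(1)] sect_til_snoc[of X 1 u x "\<lambda>k. actQ k q" ox \<alpha>] p(1) px u
      by (simp add: letter_aut_def)
  next
    case (G g)
    then show ?thesis
      using that(3)[OF G(1)] sect_til_snoc[of X 1 u x "\<lambda>k. actG k g" ox \<beta>] p(1) px u
      by (simp add: letter_aut_def)
  qed
qed

lemma sect_letter_in_embA:
  assumes l: "l \<in> letters" and p: "wordT X 1 p" "length p = Suc m" "p \<noteq> o_word ox 1 (Suc m)"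
  shows "sect X 1 (letter_aut \<alpha> \<beta> l) p \<in> embA X (Suc (Suc m)) ` A (Suc (Suc m))"
proof -
  have id: "id \<in> embA X (Suc (Suc m)) ` A (Suc (Suc m))" by (rule embA_A_closed(1)) simp
  from l p(1,2) show ?thesis
  proof (cases rule: sect_letter_cases[where \<alpha>=\<alpha> and \<beta>=\<beta>])
    case (Q q)
    then show ?thesis using p(3) id actQ_in_A[OF Q(1)] by auto
  next
    case (G g)
    then show ?thesis using p(3) id actG_in_A[OF G(1)] by auto
  qed (simp add: id)
qed

lemma sect_letter_in_Btil:
  assumes l: "l \<in> letters" and p: "wordT X 1 p" "length p = Suc m"
    and not_\<alpha>\<beta>: "p \<noteq> o_word ox 1 m @ [\<alpha> (Suc m)]" "p \<noteq> o_word ox 1 m @ [\<beta> (Suc m)]"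
  shows "sect X 1 (letter_aut \<alpha> \<beta> l) p \<in> Btil X actQ actG Q G ox \<alpha> \<beta> (Suc (Suc m))"
  using l p
proof (cases rule: sect_letter_cases[where \<alpha>=\<alpha> and \<beta>=\<beta>])
  case (Q q)
  then show ?thesis using not_\<alpha>\<beta> id_in_Btil til_actQ_in_Btil[OF Q(1)] by auto
next
  case (G g)
  then show ?thesis using not_\<alpha>\<beta> id_in_Btil til_actG_in_Btil[OF G(1)] by auto
qed (simp add: id_in_Btil)

lemma stsect_word_aut_in_Btil_or_embA:
  assumes ws: "ws \<in> lists letters" and v: "wordT X 1 v" "length v = Suc m"
    and good: "\<alpha> (Suc m) \<notin> bad_letters (Suc m) \<alpha> \<beta> ws" "\<beta> (Suc m) \<notin> bad_letters (Suc m) \<alpha> \<beta> ws"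
    and \<alpha>\<beta>: "\<And>i. i \<ge> 1 \<Longrightarrow> \<alpha> i \<noteq> \<beta> i"
  shows "stsect X 1 (word_aut \<alpha> \<beta> ws) v \<in>
           Btil X actQ actG Q G ox \<alpha> \<beta> (Suc (Suc m)) \<union> embA X (Suc (Suc m)) ` A (Suc (Suc m))"
proof -
  have trail: "wordT X 1 p \<and> length p = Suc m" if "p \<in> trail \<alpha> \<beta> ws v" for p
    using trail_wordT[OF ws v(1) that] v(2) by simp
  have "o_word ox 1 (Suc m) \<notin> trail \<alpha> \<beta> ws v \<or>
      (o_word ox 1 m @ [\<alpha> (Suc m)] \<notin> trail \<alpha> \<beta> ws v \<and> o_word ox 1 m @ [\<beta> (Suc m)] \<notin> trail \<alpha> \<beta> ws v)"
    using good v unfolding bad_letters_def by auto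
  then show ?thesis
  proof
    assume no_o: "o_word ox 1 (Suc m) \<notin> trail \<alpha> \<beta> ws v"
    have "stsect X 1 (word_aut \<alpha> \<beta> ws) v \<in> embA X (Suc (Suc m)) ` A (Suc (Suc m))"
    proof (rule stsect_word_aut_in[OF ws v(1) embA_A_closed])
      fix l p assume "l \<in> letters" "p \<in> trail \<alpha> \<beta> ws v"
      then show "sect X 1 (letter_aut \<alpha> \<beta> l) p \<in> embA X (Suc (Suc m)) ` A (Suc (Suc m))"
        using trail no_o by (metis sect_letter_in_embA)
    qed simp_all
    then show ?thesis by blast
  next
    assume no_\<alpha>\<beta>: "o_word ox 1 m @ [\<alpha> (Suc m)] \<notin> trail \<alpha> \<beta> ws v \<and> o_word ox 1 m @ [\<beta> (Suc m)] \<notin> trail \<alpha> \<beta> ws v"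
    have "stsect X 1 (word_aut \<alpha> \<beta> ws) v \<in> Btil X actQ actG Q G ox \<alpha> \<beta> (Suc (Suc m))"
    proof (rule stsect_word_aut_in[OF ws v(1) id_in_Btil Btil_comp_closed])
      fix l p assume "l \<in> letters" "p \<in> trail \<alpha> \<beta> ws v"
      then show "sect X 1 (letter_aut \<alpha> \<beta> l) p \<in> Btil X actQ actG Q G ox \<alpha> \<beta> (Suc (Suc m))"
        using trail no_\<alpha>\<beta> by (metis sect_letter_in_Btil)
    qed (use \<alpha>\<beta> in auto)
    then show ?thesis by blast
  qed
qed

lemma shrinking_if_avoids_bad_letters:
  assumes S: "inS X ox \<alpha>" "inS X ox \<beta>" and \<alpha>\<beta>: "\<And>i. i \<ge> 1 \<Longrightarrow> \<alpha> i \<noteq> \<beta> i"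
    and avoid: "\<And>ws. ws \<in> lists letters \<Longrightarrow> \<exists>k\<ge>1. \<alpha> k \<notin> bad_letters k \<alpha> \<beta> ws \<and> \<beta> k \<notin> bad_letters k \<alpha> \<beta> ws"
  shows "shrinking X actQ actG Q G ox \<alpha> \<beta>"
  unfolding shrinking_def
proof (intro conjI allI impI ballI S \<alpha>\<beta>)
  fix \<gamma> assume "\<gamma> \<in> Gam X actQ actG Q G ox \<alpha> \<beta> 1"
  then obtain ws where ws: "ws \<in> lists letters" "\<gamma> = word_aut \<alpha> \<beta> ws" using Gam_eq_word_aut by blast
  obtain k where k: "k \<ge> 1" "\<alpha> k \<notin> bad_letters k \<alpha> \<beta> ws" "\<beta> k \<notin> bad_letters k \<alpha> \<beta> ws"
    using avoid[OF ws(1)] by blast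
  then obtain m where km: "k = Suc m" by (cases k) auto
  have "stsect X 1 \<gamma> x \<in> Btil X actQ actG Q G ox \<alpha> \<beta> (k + 1) \<union> embA X (k + 1) ` A (k + 1)"
    if "wordT X 1 x" "length x = k" for x
    using stsect_word_aut_in_Btil_or_embA[OF ws(1) that[unfolded km] k(2,3)[unfolded km] \<alpha>\<beta>] ws(2) km by simp
  then show "\<exists>k\<ge>1. \<forall>x. wordT X 1 x \<and> length x = k \<longrightarrow>
      stsect X 1 \<gamma> x \<in> Btil X actQ actG Q G ox \<alpha> \<beta> (k + 1) \<union> embA X (k + 1) ` A (k + 1)"
    using k(1) by blast
qed

lemma exists_shrinking_agreeing:
  fixes Y Y' :: "nat \<Rightarrow> 'x set"
  assumes fgQ: "\<exists>S. finite S \<and> S \<subseteq> carrier Q \<and> generate Q S = carrier Q"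
    and fgG: "\<exists>S. finite S \<and> S \<subseteq> carrier G \<and> generate G S = carrier G"
    and Ysub: "\<And>i. i \<ge> 1 \<Longrightarrow> Y i \<subseteq> X i - {ox i} \<and> Y' i \<subseteq> X i - {ox i}"
    and Yne: "\<And>i. i \<ge> 1 \<Longrightarrow> Y i \<noteq> {} \<and> Y' i \<noteq> {}"
    and Ydisj: "\<And>i. i \<ge> 1 \<Longrightarrow> Y i \<inter> Y' i = {}"
    and large: "\<And>n. \<exists>k\<ge>1. n * maxordA k < card (Y k) \<and> n * maxordA k < card (Y' k)"
    and F: "finite F" and \<alpha>0: "\<alpha>0 \<in> (\<Pi>\<^sub>E i\<in>{1..}. Y i)" and \<beta>0: "\<beta>0 \<in> (\<Pi>\<^sub>E i\<in>{1..}. Y' i)"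
  shows "\<exists>\<alpha>\<in>(\<Pi>\<^sub>E i\<in>{1..}. Y i). \<exists>\<beta>\<in>(\<Pi>\<^sub>E i\<in>{1..}. Y' i).
           (\<forall>i\<in>F. \<alpha> i = \<alpha>0 i \<and> \<beta> i = \<beta>0 i) \<and> shrinking X actQ actG Q G ox \<alpha> \<beta>"
proof -
  define e where "e = from_nat_into (lists letters)"
  have e: "range e = lists letters"
    unfolding e_def using countable_letters[OF fgQ fgG] by (intro range_from_nat_into countable_lists) auto
  then have ei: "e i \<in> lists letters" for i by (metis rangeI)
  have levels: "\<exists>m. k = Suc m" if "k \<ge> 1" for k :: nat using that by (cases k) auto
  have "\<exists>\<alpha>\<in>(\<Pi>\<^sub>E i\<in>{1..}. Y i). \<exists>\<beta>\<in>(\<Pi>\<^sub>E i\<in>{1..}. Y' i). (\<forall>i\<in>F. \<alpha> i = \<alpha>0 i \<and> \<beta> i = \<beta>0 i) \<and>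
     (\<forall>i. \<exists>k\<ge>1. \<alpha> k \<notin> bad_letters k \<alpha> \<beta> (e i) \<and> \<beta> k \<notin> bad_letters k \<alpha> \<beta> (e i))"
  proof (rule diagonal_avoidance[where c="\<lambda>i. length (e i) * length (e i)" and \<mu>=maxordA,
        OF _ _ _ _ _ large F \<alpha>0 \<beta>0])
    show "finite (Y k) \<and> Y k \<noteq> {} \<and> finite (Y' k) \<and> Y' k \<noteq> {}" if "k \<ge> 1" for k
      using Ysub[OF that] Yne[OF that] finite_X[OF that] by (auto intro: finite_subset)
    show "finite (bad_letters k a b (e i))" if "k \<ge> 1" for k a b i
      using bad_letters_subset[OF ei] finite_X[OF that] levels[OF that] by (metis finite_subset)
    show "card (bad_letters k a b (e i)) \<le> length (e i) * length (e i) * maxordA k" if "k \<ge> 1" for k a b i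
      using card_bad_letters[OF ei] levels[OF that] by blast
    show "bad_letters k a b (e i) = bad_letters k a' b' (e i)"
      if "k \<ge> 1" "\<And>j. j < k \<Longrightarrow> a j = a' j \<and> b j = b' j" for k a b a' b' i
      using bad_letters_local that levels[OF that(1)] by (metis less_Suc_eq_le)
    show "maxordA k \<ge> 1" if "k \<ge> 1" for k using maxordA_pos[OF that] .
  qed
  then obtain \<alpha> \<beta> where \<alpha>: "\<alpha> \<in> (\<Pi>\<^sub>E i\<in>{1..}. Y i)" and \<beta>: "\<beta> \<in> (\<Pi>\<^sub>E i\<in>{1..}. Y' i)"
    and near: "\<forall>i\<in>F. \<alpha> i = \<alpha>0 i \<and> \<beta> i = \<beta>0 i"
    and avoid: "\<And>i. \<exists>k\<ge>1. \<alpha> k \<notin> bad_letters k \<alpha> \<beta> (e i) \<and> \<beta> k \<notin> bad_letters k \<alpha> \<beta> (e i)"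
    by blast
  have Y\<alpha>\<beta>: "\<alpha> i \<in> Y i" "\<beta> i \<in> Y' i" if "i \<ge> 1" for i
    using that PiE_mem[OF \<alpha>, of i] PiE_mem[OF \<beta>, of i] by simp_all
  have "shrinking X actQ actG Q G ox \<alpha> \<beta>"
  proof (rule shrinking_if_avoids_bad_letters)
    show "inS X ox \<alpha>" "inS X ox \<beta>" unfolding inS_def using Y\<alpha>\<beta> Ysub by blast+
    show "\<alpha> i \<noteq> \<beta> i" if "i \<ge> 1" for i
      using Y\<alpha>\<beta>[OF that] Ydisj[OF that] by (metis disjoint_iff)
    show "\<exists>k\<ge>1. \<alpha> k \<notin> bad_letters k \<alpha> \<beta> ws \<and> \<beta> k \<notin> bad_letters k \<alpha> \<beta> ws" if "ws \<in> lists letters" for ws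
      using avoid e that by (metis rangeE)
  qed
  then show ?thesis using \<alpha> \<beta> near by blast
qed

end

theorem proposition2p5:
  fixes Q :: "('q, 'c) monoid_scheme" and G :: "('g, 'd) monoid_scheme"
    and X :: "nat \<Rightarrow> 'x set" and ox :: "nat \<Rightarrow> 'x"
    and actQ :: "nat \<Rightarrow> 'q \<Rightarrow> 'x \<Rightarrow> 'x" and actG :: "nat \<Rightarrow> 'g \<Rightarrow> 'x \<Rightarrow> 'x"
    and Y Y' :: "nat \<Rightarrow> 'x set"
  assumes grpQ: "group Q" and grpG: "group G"
    and fgQ: "\<exists>S. finite S \<and> S \<subseteq> carrier Q \<and> generate Q S = carrier Q"
    and fgG: "\<exists>S. finite S \<and> S \<subseteq> carrier G \<and> generate G S = carrier G"
    and perfect: "derived Q (carrier Q) = carrier Q"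
    and finX: "\<And>n. n \<ge> 1 \<Longrightarrow> finite (X n) \<and> card (X n) \<ge> 2"
    and actionQ: "\<And>n. n \<ge> 1 \<Longrightarrow> group_action Q (X n) (actQ n)"
    and actionG: "\<And>n. n \<ge> 1 \<Longrightarrow> group_action G (X n) (actG n)"
    and trans: "\<And>n x y. n \<ge> 1 \<Longrightarrow> x \<in> X n \<Longrightarrow> y \<in> X n \<Longrightarrow>
                  \<exists>a \<in> Agrp X actQ actG Q G n. a x = y"
    and conjgen: "\<And>n. n \<ge> 1 \<Longrightarrow> Agrp X actQ actG Q G n =
         generate (BijGroup (X n))
           {actG n g \<otimes>\<^bsub>BijGroup (X n)\<^esub> actQ n q \<otimes>\<^bsub>BijGroup (X n)\<^esub> inv\<^bsub>BijGroup (X n)\<^esub> (actG n g)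
             | g q. g \<in> carrier G \<and> q \<in> carrier Q}"
    and o_in: "\<And>i. i \<ge> 1 \<Longrightarrow> ox i \<in> X i"
    and Ysub: "\<And>i. i \<ge> 1 \<Longrightarrow> Y i \<subseteq> X i - {ox i} \<and> Y' i \<subseteq> X i - {ox i}"
    and Yne: "\<And>i. i \<ge> 1 \<Longrightarrow> Y i \<noteq> {} \<and> Y' i \<noteq> {}"
    and Ydisj: "\<And>i. i \<ge> 1 \<Longrightarrow> Y i \<inter> Y' i = {}"
    and growth: "\<And>n::nat. \<exists>j\<ge>1. card (Y j) * card (Y' j)
                   > n * maxord X actQ actG Q G j * (card (Y j) + card (Y' j))"
  shows "(prod_topology (product_topology (\<lambda>i. discrete_topology (Y i)) {1..})
                        (product_topology (\<lambda>i. discrete_topology (Y' i)) {1..}))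
           closure_of
           {p \<in> topspace (prod_topology (product_topology (\<lambda>i. discrete_topology (Y i)) {1..})
                                        (product_topology (\<lambda>i. discrete_topology (Y' i)) {1..})).
              shrinking X actQ actG Q G ox (fst p) (snd p)}
         = topspace (prod_topology (product_topology (\<lambda>i. discrete_topology (Y i)) {1..})
                                   (product_topology (\<lambda>i. discrete_topology (Y' i)) {1..}))"
proof -
  interpret tree_actions Q G X actQ actG ox
    by (intro tree_actions.intro level_action.intro level_action_axioms.intro tree_actions_axioms.intro
        grpQ grpG actionQ actionG) (use finX in auto)
  have large: "\<exists>k\<ge>1. n * maxordA k < card (Y k) \<and> n * maxordA k < card (Y' k)" for n
    using growth[of n] less_of_mult_add_less_mult by blast
  show ?thesis
    by (rule closure_of_prod_product_discrete[where P="shrinking X actQ actG Q G ox"])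
      (rule exists_shrinking_agreeing[OF fgQ fgG Ysub Yne Ydisj large])
qed

end
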